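(* Let $\lambda^*(\theta)$ be as defined in the context. Then (1) $\theta\mapsto\lambda^*(\theta)$ is continuous on $(0,\infty)$; (2) if $\gamma>e^{r\tau}$ and $k>0$, $\theta\mapsto\lambda^*(\theta)$ is continuous on $(\underline\theta,0]$.
   Context: Let $B$ be a one-dimensional standard Brownian motion on a complete probability space $(\Omega,\mathcal F,\mathbb P)$ with augmented natural filtration $(\mathcal F_t)$. Constants $\mu,r\in\mathbb R$, $\sigma>0$, $\phi:=(\mu-r)/\sigma\neq0$; pricing kernel $Z_t=\exp(-\phi B_t-(r+\phi^2/2)t)$. Fix $\tau>0$, $\alpha\in(0,1)$, $k\ge0$, $\gamma>0$; $\underline\theta:=-(1+k^{1/(1-\alpha)})^{1-\alpha}$. For $\theta>0$, let $\tilde c:=1/(1+(k/\theta)^{1/(2-\alpha)})$; $(c_1,c_2)\in(0,\tilde c)\times(1,\infty)$ is the unique solution of $\frac{(c_2-1)^\alpha+\theta c_2^\alpha+k(1-c_1)^\alpha-\theta c_1^\alpha}{c_2-c_1}=\alpha[(c_2-1)^{\alpha-1}+\theta c_2^{\alpha-1}]=\alpha[k(1-c_1)^{\alpha-1}+\theta c_1^{\alpha-1}]$, $m_1(\theta):=\gamma^{\alpha-1}\frac{(c_2-1)^\alpha+\theta c_2^\alpha+k(1-c_1)^\alpha-\theta c_1^\alpha}{c_2-c_1}$, and for $q\ge\tilde n:=\alpha[k(\gamma-\tilde c\gamma)^{\alpha-1}+\theta(\tilde c\gamma)^{\alpha-1}]$, $I_1(q;\theta)$ is the unique $y\in(0,\tilde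 c\gamma]$ with $\alpha[k(\gamma-y)^{\alpha-1}+\theta y^{\alpha-1}]=q$. For $q>0$, $I_2(q;\theta)$ is the unique $y>\gamma$ with $\alpha[(y-\gamma)^{\alpha-1}+\theta y^{\alpha-1}]=q$. For $\theta\in(\underline\theta,0]$, let $c_4:=1/(1-|\theta|^{-1/(1-\alpha)})$ if $\theta<-1$ and $c_4:=\infty$ otherwise; $c_3$ is the unique solution in $(1,c_4)$ of $\frac{(c_3-1)^\alpha+\theta c_3^\alpha+k}{c_3}=\alpha[(c_3-1)^{\alpha-1}+\theta c_3^{\alpha-1}]$ and $m_2(\theta):=\gamma^{\alpha-1}\frac{(c_3-1)^\alpha+\theta c_3^\alpha+k}{c_3}$. For $\lambda>0$: if $\theta>0$, $y_\lambda(z;\theta):=I_1(\lambda z;\theta)1_{\{\lambda z>m_1(\theta)\}}+I_2(\lambda z;\theta)1_{\{\lambda z\le m_1(\theta)\}}$; if $\theta\in(\underline\theta,0]$ with either $\theta\ge-1$ or $|\theta|^{-1/(1-\alpha)}>1-\gamma e^{-r\tau}$, $y_\lambda(z;\theta):=I_2(\lambda z;\theta)1_{\{\lambda z\le m_2(\theta)\}}$. In these cases $\lambda^*(\theta)>0$ is the unique $\lambda>0$ with $\mathbb E[Z_\tau y_\lambda(Z_\tau;\theta)]=1$. *)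

theory Defs
  imports "HOL-Probability.Probability"
begin

definition std_brownian_motion :: "'a measure \<Rightarrow> (real \<Rightarrow> 'a \<Rightarrow> real) \<Rightarrow> bool" where
  "std_brownian_motion M B \<longleftrightarrow>
     prob_space M \<and>
     (\<forall>t\<ge>0. B t \<in> borel_measurable M) \<and>
     (AE \<omega> in M. B 0 \<omega> = 0) \<and>
     (AE \<omega> in M. continuous_on {0..} (\<lambda>t. B t \<omega>)) \<and>
     (\<forall>s t. 0 \<le> s \<and> s < t \<longrightarrow>
        distributed M lborel (\<lambda>\<omega>. B t \<omega> - B s \<omega>) (normal_density 0 (sqrt (t - s)))) \<and>
     (\<forall>(ts :: nat \<Rightarrow> real) n. 0 \<le> ts 0 \<and> (\<forall>i<n. ts i < ts (Suc i)) \<longrightarrow>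
        prob_space.indep_vars M (\<lambda>_. borel) (\<lambda>i \<omega>. B (ts (Suc i)) \<omega> - B (ts i) \<omega>) {..<n})"

definition theta_low :: "real \<Rightarrow> real \<Rightarrow> real" where
  "theta_low \<alpha> k = - ((1 + k powr (1 / (1 - \<alpha>))) powr (1 - \<alpha>))"

definition c_tilde :: "real \<Rightarrow> real \<Rightarrow> real \<Rightarrow> real" where
  "c_tilde \<alpha> k \<theta> = 1 / (1 + (k / \<theta>) powr (1 / (2 - \<alpha>)))"

definition c12 :: "real \<Rightarrow> real \<Rightarrow> real \<Rightarrow> real \<times> real" where
  "c12 \<alpha> k \<theta> = (THE p. 0 < fst p \<and> fst p < c_tilde \<alpha> k \<theta> \<and> 1 < snd p \<and>
      ((snd p - 1) powr \<alpha> + \<theta> * snd p powr \<alpha> + k * (1 - fst p) powr \<alpha> - \<theta> * fst p powr \<alpha>)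
          / (snd p - fst p)
        = \<alpha> * ((snd p - 1) powr (\<alpha> - 1) + \<theta> * snd p powr (\<alpha> - 1)) \<and>
      \<alpha> * ((snd p - 1) powr (\<alpha> - 1) + \<theta> * snd p powr (\<alpha> - 1))
        = \<alpha> * (k * (1 - fst p) powr (\<alpha> - 1) + \<theta> * fst p powr (\<alpha> - 1)))"

definition m1 :: "real \<Rightarrow> real \<Rightarrow> real \<Rightarrow> real \<Rightarrow> real" where
  "m1 \<alpha> k \<gamma> \<theta> = (let c1 = fst (c12 \<alpha> k \<theta>); c2 = snd (c12 \<alpha> k \<theta>) in
     \<gamma> powr (\<alpha> - 1) *
     (((c2 - 1) powr \<alpha> + \<theta> * c2 powr \<alpha> + k * (1 - c1) powr \<alpha> - \<theta> * c1 powr \<alpha>) / (c2 - c1)))"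

definition I1 :: "real \<Rightarrow> real \<Rightarrow> real \<Rightarrow> real \<Rightarrow> real \<Rightarrow> real" where
  "I1 \<alpha> k \<gamma> \<theta> q = (THE y. 0 < y \<and> y \<le> c_tilde \<alpha> k \<theta> * \<gamma> \<and>
      \<alpha> * (k * (\<gamma> - y) powr (\<alpha> - 1) + \<theta> * y powr (\<alpha> - 1)) = q)"

definition I2 :: "real \<Rightarrow> real \<Rightarrow> real \<Rightarrow> real \<Rightarrow> real" where
  "I2 \<alpha> \<gamma> \<theta> q = (THE y. \<gamma> < y \<and>
      \<alpha> * ((y - \<gamma>) powr (\<alpha> - 1) + \<theta> * y powr (\<alpha> - 1)) = q)"

text \<open>c3 for \<theta> \<le> 0; the bound c4 is +\<infinity> unless \<theta> < -1.\<close>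
definition c3 :: "real \<Rightarrow> real \<Rightarrow> real \<Rightarrow> real" where
  "c3 \<alpha> k \<theta> = (THE c. 1 < c \<and>
      (\<theta> < -1 \<longrightarrow> c < 1 / (1 - \<bar>\<theta>\<bar> powr (- 1 / (1 - \<alpha>)))) \<and>
      ((c - 1) powr \<alpha> + \<theta> * c powr \<alpha> + k) / c
        = \<alpha> * ((c - 1) powr (\<alpha> - 1) + \<theta> * c powr (\<alpha> - 1)))"

definition m2 :: "real \<Rightarrow> real \<Rightarrow> real \<Rightarrow> real \<Rightarrow> real" where
  "m2 \<alpha> k \<gamma> \<theta> = (let c = c3 \<alpha> k \<theta> in
     \<gamma> powr (\<alpha> - 1) * (((c - 1) powr \<alpha> + \<theta> * c powr \<alpha> + k) / c))"

definition y_lam :: "real \<Rightarrow> real \<Rightarrow> real \<Rightarrow> real \<Rightarrow> real \<Rightarrow> real \<Rightarrow> real" where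
  "y_lam \<alpha> k \<gamma> \<theta> lam z =
     (if 0 < \<theta> then
        (if lam * z > m1 \<alpha> k \<gamma> \<theta> then I1 \<alpha> k \<gamma> \<theta> (lam * z) else I2 \<alpha> \<gamma> \<theta> (lam * z))
      else (if lam * z \<le> m2 \<alpha> k \<gamma> \<theta> then I2 \<alpha> \<gamma> \<theta> (lam * z) else 0))"

definition pricing_kernel :: "real \<Rightarrow> real \<Rightarrow> (real \<Rightarrow> 'a \<Rightarrow> real) \<Rightarrow> real \<Rightarrow> 'a \<Rightarrow> real" where
  "pricing_kernel \<phi> r B t \<omega> = exp (- \<phi> * B t \<omega> - (r + \<phi>\<^sup>2 / 2) * t)"

definition lambda_star :: "'a measure \<Rightarrow> (real \<Rightarrow> 'a \<Rightarrow> real) \<Rightarrow> real \<Rightarrow> real \<Rightarrow> real \<Rightarrow>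
    real \<Rightarrow> real \<Rightarrow> real \<Rightarrow> real \<Rightarrow> real \<Rightarrow> real" where
  "lambda_star M B \<mu> r \<sigma> \<tau> \<alpha> k \<gamma> \<theta> =
     (let \<phi> = (\<mu> - r) / \<sigma>;
          X = (\<lambda>lam \<omega>. pricing_kernel \<phi> r B \<tau> \<omega> *
                        y_lam \<alpha> k \<gamma> \<theta> lam (pricing_kernel \<phi> r B \<tau> \<omega>))
      in THE lam. 0 < lam \<and> integrable M (X lam) \<and> (\<integral>\<omega>. X lam \<omega> \<partial>M) = 1)"

end

theory Submission
  imports Defs
begin

(*
  For fixed \<theta>, y_\<lambda>(z;\<theta>) = y_opt \<theta> (\<lambda> z), where y_opt \<theta> is the inverse of the marginal
  utility of the concave envelope of the S-shaped utility: it follows the inverse marginal utility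
  of the gain branch below a threshold m(\<theta>), and the loss branch (or 0 when \<theta> \<le> 0) above it.
  The threshold is the unique zero of the difference of the convex conjugates of the two
  branches; we identify it with m1(\<theta>) and m2(\<theta>) of the statement and show that it, and both
  inverse marginal utilities, depend continuously on \<theta>.

  The budget F(\<theta>, \<lambda>) = E[Z_\<tau> y_opt \<theta> (\<lambda> Z_\<tau>)] is therefore continuous and strictly
  decreasing in \<lambda>, tends to 0 as \<lambda> \<rightarrow> \<infinity> and exceeds 1 for small \<lambda>, so \<lambda>*(\<theta>) is its
  unique root. Since Z_\<tau> has a density, \<lambda> Z_\<tau> hits the jump m(\<theta>) with probability 0, and
  dominated convergence gives continuity of F in \<theta>. A root of a family that is strictly
  monotone in \<lambda> and continuous in \<theta> moves continuously with \<theta>.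
*)

lemma diff_ge_of_deriv_ge:
  fixes f f' :: "real \<Rightarrow> real"
  assumes "a \<le> b" "continuous_on {a..b} f"
    "\<And>x. a < x \<Longrightarrow> x < b \<Longrightarrow> (f has_real_derivative f' x) (at x)"
    "\<And>x. a < x \<Longrightarrow> x < b \<Longrightarrow> c \<le> f' x"
  shows "c * (b - a) \<le> f b - f a"
proof -
  have "(\<lambda>x. f x - c * x) a \<le> (\<lambda>x. f x - c * x) b"
  proof (rule DERIV_nonneg_imp_increasing_open[OF assms(1)])
    fix x assume x: "a < x" "x < b"
    show "\<exists>y. ((\<lambda>x. f x - c * x) has_real_derivative y) (at x) \<and> 0 \<le> y"
      by (rule exI[of _ "f' x - c"]) (use assms(3,4)[OF x] in \<open>auto intro!: derivative_eq_intros\<close>)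
  qed (use assms(2) in \<open>auto intro!: continuous_intros\<close>)
  then show ?thesis by (simp add: algebra_simps)
qed

lemma diff_le_of_deriv_le:
  fixes f f' :: "real \<Rightarrow> real"
  assumes "a \<le> b" "continuous_on {a..b} f"
    "\<And>x. a < x \<Longrightarrow> x < b \<Longrightarrow> (f has_real_derivative f' x) (at x)"
    "\<And>x. a < x \<Longrightarrow> x < b \<Longrightarrow> f' x \<le> c"
  shows "f b - f a \<le> c * (b - a)"
proof -
  have "(-c) * (b - a) \<le> (\<lambda>x. - f x) b - (\<lambda>x. - f x) a"
    by (rule diff_ge_of_deriv_ge[where f'="\<lambda>x. - f' x"])
       (use assms in \<open>auto intro!: derivative_eq_intros continuous_intros\<close>)
  then show ?thesis by (simp add: algebra_simps)
qed

lemma diff_gt_of_deriv_gt: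
  fixes f f' :: "real \<Rightarrow> real"
  assumes "a < b" "continuous_on {a..b} f"
    "\<And>x. a < x \<Longrightarrow> x < b \<Longrightarrow> (f has_real_derivative f' x) (at x)"
    "\<And>x. a < x \<Longrightarrow> x < b \<Longrightarrow> c < f' x"
  shows "c * (b - a) < f b - f a"
proof -
  have "(\<lambda>x. f x - c * x) a < (\<lambda>x. f x - c * x) b"
  proof (rule DERIV_pos_imp_increasing_open[OF assms(1)])
    fix x assume x: "a < x" "x < b"
    show "\<exists>y. ((\<lambda>x. f x - c * x) has_real_derivative y) (at x) \<and> 0 < y"
      by (rule exI[of _ "f' x - c"]) (use assms(3,4)[OF x] in \<open>auto intro!: derivative_eq_intros\<close>)
  qed (use assms(2) in \<open>auto intro!: continuous_intros\<close>)
  then show ?thesis by (simp add: algebra_simps)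
qed

lemma ex1_root_strict_antimono:
  fixes g :: "real \<Rightarrow> real"
  assumes "a \<le> b" "{a..b} \<subseteq> S" "continuous_on {a..b} g" "g b \<le> q" "q \<le> g a"
    and anti: "strict_antimono_on S g"
  shows "\<exists>!x. x \<in> S \<and> g x = q"
proof -
  obtain x where x: "a \<le> x" "x \<le> b" "g x = q"
    using IVT2'[of g b q a] assms(1,3-5) by blast
  have "y = x" if "y \<in> S" "g y = q" for y
    using monotone_onD[OF anti, of x y] monotone_onD[OF anti, of y x] x that assms(2)
    by (cases x y rule: linorder_cases) auto
  then show ?thesis using x assms(2) by auto
qed

lemma eventually_root_gt:
  fixes g :: "'b \<Rightarrow> real \<Rightarrow> real" and y q :: "'b \<Rightarrow> real"
  assumes "l < y0" "a < y0" and q: "(q \<longlongrightarrow> q0) F"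
    and lim: "\<And>c. l < c \<Longrightarrow> c < y0 \<Longrightarrow> ((\<lambda>x. g x c) \<longlongrightarrow> g0 c) F"
    and above: "\<And>c. l < c \<Longrightarrow> c < y0 \<Longrightarrow> q0 < g0 c"
    and root: "\<And>c. l < c \<Longrightarrow> c < y0 \<Longrightarrow> \<forall>\<^sub>F x in F. q x < g x c \<longrightarrow> c < y x"
  shows "\<forall>\<^sub>F x in F. a < y x"
proof -
  define c where "c = max a ((l + y0) / 2)"
  have c: "l < c" "c < y0" "a \<le> c" using assms(1,2) unfolding c_def by (auto simp: less_max_iff_disj)
  have "\<forall>\<^sub>F x in F. 0 < g x c - q x"
    using tendsto_diff[OF lim[OF c(1,2)] q] above[OF c(1,2)] by (intro order_tendstoD(1)) auto
  with root[OF c(1,2)] show ?thesis by eventually_elim (use c in auto)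
qed

lemma eventually_root_lt:
  fixes g :: "'b \<Rightarrow> real \<Rightarrow> real" and y q :: "'b \<Rightarrow> real"
  assumes "y0 < u" "y0 < b" and q: "(q \<longlongrightarrow> q0) F"
    and lim: "\<And>c. y0 < c \<Longrightarrow> c < u \<Longrightarrow> ((\<lambda>x. g x c) \<longlongrightarrow> g0 c) F"
    and below: "\<And>c. y0 < c \<Longrightarrow> c < u \<Longrightarrow> g0 c < q0"
    and root: "\<And>c. y0 < c \<Longrightarrow> c < u \<Longrightarrow> \<forall>\<^sub>F x in F. g x c < q x \<longrightarrow> y x < c"
  shows "\<forall>\<^sub>F x in F. y x < b"
proof -
  define c where "c = min b ((y0 + u) / 2)"
  have c: "y0 < c" "c < u" "c \<le> b" using assms(1,2) unfolding c_def by (auto simp: min_less_iff_disj)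
  have "\<forall>\<^sub>F x in F. 0 < q x - g x c"
    using tendsto_diff[OF q lim[OF c(1,2)]] below[OF c(1,2)] by (intro order_tendstoD(1)) auto
  with root[OF c(1,2)] show ?thesis by eventually_elim (use c in auto)
qed

lemma tendsto_root_antimono:
  fixes g :: "'b \<Rightarrow> real \<Rightarrow> real" and y q :: "'b \<Rightarrow> real"
  assumes "l < y0" "y0 < u" and q: "(q \<longlongrightarrow> q0) F"
    and lim: "\<And>c. l < c \<Longrightarrow> c < u \<Longrightarrow> ((\<lambda>x. g x c) \<longlongrightarrow> g0 c) F"
    and above: "\<And>c. l < c \<Longrightarrow> c < y0 \<Longrightarrow> q0 < g0 c"
    and below: "\<And>c. y0 < c \<Longrightarrow> c < u \<Longrightarrow> g0 c < q0"
    and root: "\<And>c. l < c \<Longrightarrow> c < u \<Longrightarrow>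
      \<forall>\<^sub>F x in F. (q x < g x c \<longrightarrow> c < y x) \<and> (g x c < q x \<longrightarrow> y x < c)"
  shows "(y \<longlongrightarrow> y0) F"
proof (rule order_tendstoI)
  show "\<forall>\<^sub>F x in F. a < y x" if "a < y0" for a
  proof (rule eventually_root_gt[OF assms(1) that q])
    fix c assume c: "l < c" "c < y0"
    show "((\<lambda>x. g x c) \<longlongrightarrow> g0 c) F" using lim c assms(2) by simp
    show "q0 < g0 c" using above c .
    show "\<forall>\<^sub>F x in F. q x < g x c \<longrightarrow> c < y x"
      using root[of c] c assms(2) by (auto elim: eventually_mono)
  qed
  show "\<forall>\<^sub>F x in F. y x < b" if "y0 < b" for b
  proof (rule eventually_root_lt[OF assms(2) that q])
    fix c assume c: "y0 < c" "c < u"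
    show "((\<lambda>x. g x c) \<longlongrightarrow> g0 c) F" using lim c assms(1) by simp
    show "g0 c < q0" using below c .
    show "\<forall>\<^sub>F x in F. g x c < q x \<longrightarrow> y x < c"
      using root[of c] c assms(1) by (auto elim: eventually_mono)
  qed
qed

section \<open>Inverse marginal utilities\<close>

locale s_shaped_utility =
  fixes \<alpha> k \<gamma> :: real
  assumes alpha_pos: "0 < \<alpha>" and alpha_lt_1: "\<alpha> < 1" and k_nonneg: "0 \<le> k" and gamma_pos: "0 < \<gamma>"
begin

lemma powr_alpha_inverse: "0 < x \<Longrightarrow> (x powr (1 / (\<alpha> - 1))) powr (\<alpha> - 1) = x"
  using alpha_lt_1 by (simp add: powr_powr)

lemma powr_alpha_split: "0 < y \<Longrightarrow> y powr \<alpha> = y * y powr (\<alpha> - 1)"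
  by (simp add: powr_diff)

definition U_gain :: "real \<Rightarrow> real \<Rightarrow> real" where
  "U_gain \<theta> y = (y - \<gamma>) powr \<alpha> + \<theta> * y powr \<alpha>"

definition dU_gain :: "real \<Rightarrow> real \<Rightarrow> real" where
  "dU_gain \<theta> y = \<alpha> * ((y - \<gamma>) powr (\<alpha> - 1) + \<theta> * y powr (\<alpha> - 1))"

lemma U_gain_deriv: "\<gamma> < y \<Longrightarrow> (U_gain \<theta> has_real_derivative dU_gain \<theta> y) (at y)"
  unfolding U_gain_def dU_gain_def using gamma_pos
  by (auto intro!: derivative_eq_intros simp: algebra_simps)

lemma U_gain_cont: "continuous_on {\<gamma>..} (U_gain \<theta>)"
  unfolding U_gain_def using gamma_pos alpha_pos
  by (intro continuous_intros continuous_on_powr') auto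

lemma dU_gain_cont: "continuous_on {\<gamma><..} (dU_gain \<theta>)"
  unfolding dU_gain_def using gamma_pos by (auto intro!: continuous_intros)

lemma tendsto_dU_gain_theta:
  "(\<theta>f \<longlongrightarrow> \<theta>0) F \<Longrightarrow> ((\<lambda>x. dU_gain (\<theta>f x) y) \<longlongrightarrow> dU_gain \<theta>0 y) F"
  unfolding dU_gain_def by (auto intro!: tendsto_intros)

lemma dU_gain_factor:
  assumes "\<gamma> < y"
  shows "dU_gain \<theta> y = \<alpha> * y powr (\<alpha> - 1) * (((y - \<gamma>) / y) powr (\<alpha> - 1) + \<theta>)"
proof -
  have "(y - \<gamma>) powr (\<alpha> - 1) = y powr (\<alpha> - 1) * ((y - \<gamma>) / y) powr (\<alpha> - 1)"
    using assms gamma_pos by (simp add: powr_divide)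
  then show ?thesis unfolding dU_gain_def by (simp add: algebra_simps)
qed

text \<open>In the factorisation above both factors decrease, so the product does as long as it is positive.\<close>

lemma dU_gain_less:
  assumes "\<gamma> < y1" "y1 < y2" "0 < dU_gain \<theta> y1 \<or> 0 < dU_gain \<theta> y2"
  shows "dU_gain \<theta> y2 < dU_gain \<theta> y1"
proof (cases "0 < dU_gain \<theta> y2")
  case True
  have y1p: "0 < y1" using assms gamma_pos by linarith
  have r: "(y1 - \<gamma>) / y1 < (y2 - \<gamma>) / y2"
    using assms gamma_pos y1p by (simp add: field_simps)
  have r0: "0 < (y1 - \<gamma>) / y1" using assms y1p by simp
  have rho: "((y2 - \<gamma>) / y2) powr (\<alpha> - 1) < ((y1 - \<gamma>) / y1) powr (\<alpha> - 1)"
    using powr_less_mono2_neg[OF _ r0 r] alpha_lt_1 by simp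
  have yp: "y2 powr (\<alpha> - 1) < y1 powr (\<alpha> - 1)"
    using powr_less_mono2_neg[OF _ y1p assms(2)] alpha_lt_1 by simp
  have pos: "0 < ((y2 - \<gamma>) / y2) powr (\<alpha> - 1) + \<theta>"
    using True dU_gain_factor[of y2 \<theta>] assms alpha_pos y1p
    by (smt (verit, best) powr_gt_zero zero_less_mult_iff)
  have "y2 powr (\<alpha> - 1) * (((y2 - \<gamma>) / y2) powr (\<alpha> - 1) + \<theta>)
        < y1 powr (\<alpha> - 1) * (((y1 - \<gamma>) / y1) powr (\<alpha> - 1) + \<theta>)"
    by (rule mult_strict_mono) (use yp rho pos in auto)
  then show ?thesis using dU_gain_factor[of y1 \<theta>] dU_gain_factor[of y2 \<theta>] assms alpha_pos
    by (simp add: mult.assoc)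
next
  case False
  then show ?thesis using assms(3) by linarith
qed

lemma dU_gain_le:
  assumes "\<gamma> < y1" "y1 \<le> y2" "0 < dU_gain \<theta> y1 \<or> 0 < dU_gain \<theta> y2"
  shows "dU_gain \<theta> y2 \<le> dU_gain \<theta> y1"
  using dU_gain_less[of y1 y2 \<theta>] assms by (cases "y1 = y2") auto

lemma dU_gain_ge_near_gamma:
  assumes q: "0 < q"
  shows "\<exists>y>\<gamma>. q \<le> dU_gain \<theta> y"
proof -
  define w where "w = q / \<alpha> + \<bar>\<theta>\<bar> * \<gamma> powr (\<alpha> - 1)"
  define y where "y = \<gamma> + w powr (1 / (\<alpha> - 1))"
  have w: "0 < w" using q alpha_pos unfolding w_def by (simp add: add_pos_nonneg)
  have y: "\<gamma> < y" using w unfolding y_def by simp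
  have e: "(y - \<gamma>) powr (\<alpha> - 1) = w"
    using powr_alpha_inverse[OF w] unfolding y_def by (simp only: add_diff_cancel_left')
  have "y powr (\<alpha> - 1) \<le> \<gamma> powr (\<alpha> - 1)"
    using powr_mono2'[of "\<alpha> - 1" \<gamma> y] alpha_lt_1 gamma_pos y by simp
  then have "\<bar>\<theta>\<bar> * y powr (\<alpha> - 1) \<le> \<bar>\<theta>\<bar> * \<gamma> powr (\<alpha> - 1)"
    by (intro mult_left_mono) simp_all
  moreover have "- \<bar>\<theta>\<bar> * y powr (\<alpha> - 1) \<le> \<theta> * y powr (\<alpha> - 1)"
    by (intro mult_right_mono) simp_all
  ultimately have "q / \<alpha> \<le> (y - \<gamma>) powr (\<alpha> - 1) + \<theta> * y powr (\<alpha> - 1)"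
    using e unfolding w_def by linarith
  then have "q \<le> dU_gain \<theta> y"
    unfolding dU_gain_def using alpha_pos by (simp add: divide_le_eq mult.commute)
  then show ?thesis using y by blast
qed

lemma dU_gain_le_far:
  assumes q: "0 < q"
  shows "\<exists>y>\<gamma>. dU_gain \<theta> y \<le> q"
proof -
  define w where "w = q / (\<alpha> * (1 + \<bar>\<theta>\<bar>))"
  define y where "y = \<gamma> + w powr (1 / (\<alpha> - 1))"
  have t1: "0 < 1 + \<bar>\<theta>\<bar>" using abs_ge_zero[of \<theta>] by linarith
  have w: "0 < w" unfolding w_def by (rule divide_pos_pos[OF q mult_pos_pos[OF alpha_pos t1]])
  have y: "\<gamma> < y" using w unfolding y_def by simp
  have e: "(y - \<gamma>) powr (\<alpha> - 1) = w"
    using powr_alpha_inverse[OF w] unfolding y_def by (simp only: add_diff_cancel_left')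
  have "y powr (\<alpha> - 1) \<le> (y - \<gamma>) powr (\<alpha> - 1)"
    using powr_mono2'[of "\<alpha> - 1" "y - \<gamma>" y] alpha_lt_1 gamma_pos y by simp
  then have "\<bar>\<theta>\<bar> * y powr (\<alpha> - 1) \<le> \<bar>\<theta>\<bar> * (y - \<gamma>) powr (\<alpha> - 1)"
    by (intro mult_left_mono) simp_all
  moreover have "\<theta> * y powr (\<alpha> - 1) \<le> \<bar>\<theta>\<bar> * y powr (\<alpha> - 1)"
    by (intro mult_right_mono) simp_all
  ultimately have "(y - \<gamma>) powr (\<alpha> - 1) + \<theta> * y powr (\<alpha> - 1) \<le> (1 + \<bar>\<theta>\<bar>) * (y - \<gamma>) powr (\<alpha> - 1)"
    by (simp add: distrib_right)
  also have "\<dots> = q / \<alpha>" using e t1 alpha_pos unfolding w_def by simp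
  finally have "dU_gain \<theta> y \<le> q"
    unfolding dU_gain_def using alpha_pos by (simp add: le_divide_eq mult.commute)
  then show ?thesis using y by blast
qed

lemma ex1_dU_gain_eq:
  assumes q: "0 < q"
  shows "\<exists>!y. \<gamma> < y \<and> dU_gain \<theta> y = q"
proof -
  obtain ya yb where ya: "\<gamma> < ya" "q \<le> dU_gain \<theta> ya" and yb: "\<gamma> < yb" "dU_gain \<theta> yb \<le> q"
    using dU_gain_ge_near_gamma[OF q] dU_gain_le_far[OF q] by blast
  have cont: "continuous_on {min ya yb..max ya yb} (dU_gain \<theta>)"
    by (rule continuous_on_subset[OF dU_gain_cont]) (use ya yb in auto)
  obtain y where y: "min ya yb \<le> y" "dU_gain \<theta> y = q"
  proof (cases "ya \<le> yb")
    case True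
    then show ?thesis using IVT2'[of "dU_gain \<theta>" yb q ya] ya yb cont that by auto
  next
    case False
    then show ?thesis using IVT'[of "dU_gain \<theta>" yb q ya] ya yb cont that by auto
  qed
  have yg: "\<gamma> < y" using y ya yb by linarith
  have "y' = y" if "\<gamma> < y'" "dU_gain \<theta> y' = q" for y'
    using dU_gain_less[of y y' \<theta>] dU_gain_less[of y' y \<theta>] that y yg q
    by (cases y y' rule: linorder_cases) auto
  then show ?thesis using y ya yb by (intro ex1I[of _ y]) auto
qed

abbreviation "I_gain \<theta> q \<equiv> I2 \<alpha> \<gamma> \<theta> q"

lemma I_gain_gt: "0 < q \<Longrightarrow> \<gamma> < I_gain \<theta> q"
  and dU_gain_I_gain: "0 < q \<Longrightarrow> dU_gain \<theta> (I_gain \<theta> q) = q"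
  using theI'[OF ex1_dU_gain_eq, of q \<theta>] unfolding I2_def dU_gain_def by auto

lemma I_gain_eq:
  assumes "0 < q" "\<gamma> < y" "dU_gain \<theta> y = q"
  shows "I_gain \<theta> q = y"
  using ex1_dU_gain_eq[OF assms(1)] I_gain_gt[OF assms(1)] dU_gain_I_gain[OF assms(1)] assms(2,3)
  by blast

lemma I_gain_less:
  assumes "0 < q1" "q1 < q2"
  shows "I_gain \<theta> q2 < I_gain \<theta> q1"
proof (rule ccontr)
  assume "\<not> ?thesis"
  then have "dU_gain \<theta> (I_gain \<theta> q1) \<ge> dU_gain \<theta> (I_gain \<theta> q2)"
    using assms by (intro dU_gain_le) (auto simp: I_gain_gt dU_gain_I_gain)
  then show False using assms by (simp add: dU_gain_I_gain)
qed

lemma I_gain_le: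
  assumes "0 < q" "\<theta> \<le> T" "0 \<le> T"
  shows "I_gain \<theta> q \<le> \<gamma> + (q / (\<alpha> * (1 + T))) powr (1 / (\<alpha> - 1))"
proof -
  define y where "y = I_gain \<theta> q"
  have y: "\<gamma> < y" "dU_gain \<theta> y = q" using I_gain_gt dU_gain_I_gain assms(1) unfolding y_def by auto
  have "y powr (\<alpha> - 1) \<le> (y - \<gamma>) powr (\<alpha> - 1)"
    using powr_mono2'[of "\<alpha> - 1" "y - \<gamma>" y] alpha_lt_1 gamma_pos y by simp
  then have "\<theta> * y powr (\<alpha> - 1) \<le> T * (y - \<gamma>) powr (\<alpha> - 1)"
    using assms by (meson mult_mono powr_ge_zero order.trans)
  then have "\<alpha> * (\<theta> * y powr (\<alpha> - 1)) \<le> \<alpha> * (T * (y - \<gamma>) powr (\<alpha> - 1))"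
    using alpha_pos by (intro mult_left_mono) auto
  then have "q \<le> \<alpha> * ((1 + T) * (y - \<gamma>) powr (\<alpha> - 1))"
    using y(2) unfolding dU_gain_def by (simp add: algebra_simps)
  then have w: "q / (\<alpha> * (1 + T)) \<le> (y - \<gamma>) powr (\<alpha> - 1)"
    using alpha_pos assms by (simp add: field_simps add_pos_nonneg)
  have w0: "0 < q / (\<alpha> * (1 + T))" using alpha_pos assms by (simp add: add_pos_nonneg)
  have "((y - \<gamma>) powr (\<alpha> - 1)) powr (1 / (\<alpha> - 1)) \<le> (q / (\<alpha> * (1 + T))) powr (1 / (\<alpha> - 1))"
    using powr_mono2'[OF _ w0 w, of "1 / (\<alpha> - 1)"] alpha_lt_1 by simp
  moreover have "((y - \<gamma>) powr (\<alpha> - 1)) powr (1 / (\<alpha> - 1)) = y - \<gamma>"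
    using y alpha_lt_1 by (simp add: powr_powr)
  ultimately show ?thesis unfolding y_def by simp
qed

lemma tendsto_I_gain:
  assumes th: "(\<theta>f \<longlongrightarrow> \<theta>0) F" and qq: "(qf \<longlongrightarrow> q0) F" and q0: "0 < q0"
  shows "((\<lambda>x. I_gain (\<theta>f x) (qf x)) \<longlongrightarrow> I_gain \<theta>0 q0) F"
proof -
  define y0 where "y0 = I_gain \<theta>0 q0"
  have y0: "\<gamma> < y0" "dU_gain \<theta>0 y0 = q0" using I_gain_gt dU_gain_I_gain q0 unfolding y0_def by auto
  have evq: "\<forall>\<^sub>F x in F. 0 < qf x" using order_tendstoD(1)[OF qq q0] .
  show ?thesis unfolding y0_def[symmetric]
  proof (rule tendsto_root_antimono[OF y0(1) less_add_one qq tendsto_dU_gain_theta[OF th]])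
    show "q0 < dU_gain \<theta>0 c" if "\<gamma> < c" "c < y0" for c
      using dU_gain_less[of c y0 \<theta>0] y0 that q0 by auto
    show "dU_gain \<theta>0 c < q0" if "y0 < c" for c
      using dU_gain_less[of y0 c \<theta>0] y0 that q0 by auto
    show "\<forall>\<^sub>F x in F. (qf x < dU_gain (\<theta>f x) c \<longrightarrow> c < I_gain (\<theta>f x) (qf x)) \<and>
        (dU_gain (\<theta>f x) c < qf x \<longrightarrow> I_gain (\<theta>f x) (qf x) < c)" if c: "\<gamma> < c" for c
      using evq
    proof eventually_elim
      case (elim x)
      then show ?case
        using dU_gain_le[of c "I_gain (\<theta>f x) (qf x)" "\<theta>f x"]
          dU_gain_le[of "I_gain (\<theta>f x) (qf x)" c "\<theta>f x"] c
        by (auto simp: I_gain_gt dU_gain_I_gain not_less[symmetric])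
    qed
  qed
qed

definition conj_gain :: "real \<Rightarrow> real \<Rightarrow> real" where
  "conj_gain \<theta> q = U_gain \<theta> (I_gain \<theta> q) - q * I_gain \<theta> q"

lemma conj_gain_ge:
  assumes q: "0 < q" and w: "\<gamma> \<le> w"
  shows "U_gain \<theta> w - q * w \<le> conj_gain \<theta> q"
proof -
  define y where "y = I_gain \<theta> q"
  have y: "\<gamma> < y" "dU_gain \<theta> y = q" using I_gain_gt dU_gain_I_gain q unfolding y_def by auto
  show ?thesis
  proof (cases "w \<le> y")
    case True
    have "q * (y - w) \<le> U_gain \<theta> y - U_gain \<theta> w"
    proof (rule diff_ge_of_deriv_ge[OF True])
      show "continuous_on {w..y} (U_gain \<theta>)" by (rule continuous_on_subset[OF U_gain_cont]) (use w in auto)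
      fix x assume x: "w < x" "x < y"
      show "(U_gain \<theta> has_real_derivative dU_gain \<theta> x) (at x)" by (rule U_gain_deriv) (use x w in auto)
      show "q \<le> dU_gain \<theta> x" using dU_gain_le[of x y \<theta>] x w y q by auto
    qed
    then show ?thesis unfolding conj_gain_def y_def[symmetric] by (simp add: algebra_simps)
  next
    case False
    have "U_gain \<theta> w - U_gain \<theta> y \<le> q * (w - y)"
    proof (rule diff_le_of_deriv_le)
      show "y \<le> w" using False by simp
      show "continuous_on {y..w} (U_gain \<theta>)" by (rule continuous_on_subset[OF U_gain_cont]) (use y in auto)
      fix x assume x: "y < x" "x < w"
      show "(U_gain \<theta> has_real_derivative dU_gain \<theta> x) (at x)" by (rule U_gain_deriv) (use x y in auto)
      show "dU_gain \<theta> x \<le> q" using dU_gain_le[of y x \<theta>] x y q by auto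
    qed
    then show ?thesis unfolding conj_gain_def y_def[symmetric] by (simp add: algebra_simps)
  qed
qed

lemma conj_gain_step:
  assumes "0 < q1" "q1 < q2"
  shows "conj_gain \<theta> q2 \<le> conj_gain \<theta> q1 - (q2 - q1) * I_gain \<theta> q2"
proof -
  have "U_gain \<theta> (I_gain \<theta> q2) - q1 * I_gain \<theta> q2 \<le> conj_gain \<theta> q1"
    by (rule conj_gain_ge[OF assms(1)]) (use I_gain_gt[of q2 \<theta>] assms in simp)
  then show ?thesis unfolding conj_gain_def by (simp add: algebra_simps)
qed

lemma conj_gain_less:
  assumes "0 < q1" "q1 < q2"
  shows "conj_gain \<theta> q2 < conj_gain \<theta> q1"
proof -
  have "0 < (q2 - q1) * I_gain \<theta> q2"
    using assms I_gain_gt[of q2 \<theta>] gamma_pos by (intro mult_pos_pos) auto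
  then show ?thesis using conj_gain_step[OF assms, of \<theta>] by linarith
qed

lemma conj_gain_le:
  assumes "0 \<le> T" "\<theta> \<le> T" "(1 + T) * \<gamma> powr (\<alpha> - 1) \<le> q"
  shows "conj_gain \<theta> q \<le> \<gamma> * ((1 + T) * \<gamma> powr (\<alpha> - 1) - q)"
proof -
  have "0 < (1 + T) * \<gamma> powr (\<alpha> - 1)" using assms(1) gamma_pos by (intro mult_pos_pos) auto
  then have q: "0 < q" using assms(3) by linarith
  define y where "y = I_gain \<theta> q"
  have y: "\<gamma> < y" using I_gain_gt q unfolding y_def by auto
  have y0: "0 < y" using y gamma_pos by simp
  have "(y - \<gamma>) powr \<alpha> \<le> y powr \<alpha>" using y gamma_pos alpha_pos by (intro powr_mono2) auto
  moreover have "\<theta> * y powr \<alpha> \<le> T * y powr \<alpha>" using assms by (intro mult_right_mono) auto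
  ultimately have "U_gain \<theta> y \<le> (1 + T) * y powr \<alpha>" unfolding U_gain_def by (simp add: distrib_right)
  also have "\<dots> = y * ((1 + T) * y powr (\<alpha> - 1))" using powr_alpha_split[OF y0] by simp
  also have "\<dots> \<le> y * ((1 + T) * \<gamma> powr (\<alpha> - 1))"
  proof -
    have "y powr (\<alpha> - 1) \<le> \<gamma> powr (\<alpha> - 1)" using powr_mono2'[of "\<alpha> - 1" \<gamma> y] alpha_lt_1 gamma_pos y by simp
    then show ?thesis using y0 assms by (intro mult_left_mono) auto
  qed
  finally have "conj_gain \<theta> q \<le> y * ((1 + T) * \<gamma> powr (\<alpha> - 1) - q)"
    unfolding conj_gain_def y_def[symmetric] by (simp add: algebra_simps)
  also have "\<dots> \<le> \<gamma> * ((1 + T) * \<gamma> powr (\<alpha> - 1) - q)"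
    using y assms(3) by (intro mult_right_mono_neg) auto
  finally show ?thesis .
qed

lemma tendsto_conj_gain:
  assumes th: "(\<theta>f \<longlongrightarrow> \<theta>0) F" and qq: "(qf \<longlongrightarrow> q0) F" and q0: "0 < q0"
  shows "((\<lambda>x. conj_gain (\<theta>f x) (qf x)) \<longlongrightarrow> conj_gain \<theta>0 q0) F"
proof -
  have I: "((\<lambda>x. I_gain (\<theta>f x) (qf x)) \<longlongrightarrow> I_gain \<theta>0 q0) F" by (rule tendsto_I_gain[OF th qq q0])
  have g: "I_gain \<theta>0 q0 - \<gamma> \<noteq> 0" "I_gain \<theta>0 q0 \<noteq> 0" using I_gain_gt[OF q0, of \<theta>0] gamma_pos by auto
  have "((\<lambda>x. (I_gain (\<theta>f x) (qf x) - \<gamma>) powr \<alpha>) \<longlongrightarrow> (I_gain \<theta>0 q0 - \<gamma>) powr \<alpha>) F"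
    by (intro tendsto_powr tendsto_diff I tendsto_const g(1))
  moreover have "((\<lambda>x. I_gain (\<theta>f x) (qf x) powr \<alpha>) \<longlongrightarrow> I_gain \<theta>0 q0 powr \<alpha>) F"
    by (rule tendsto_powr[OF I tendsto_const g(2)])
  ultimately show ?thesis unfolding conj_gain_def U_gain_def
    by (intro tendsto_diff tendsto_add tendsto_mult th qq I)
qed


definition U_loss :: "real \<Rightarrow> real \<Rightarrow> real" where
  "U_loss \<theta> y = - k * (\<gamma> - y) powr \<alpha> + \<theta> * y powr \<alpha>"

definition dU_loss :: "real \<Rightarrow> real \<Rightarrow> real" where
  "dU_loss \<theta> y = \<alpha> * (k * (\<gamma> - y) powr (\<alpha> - 1) + \<theta> * y powr (\<alpha> - 1))"

definition y_tilde :: "real \<Rightarrow> real" where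
  "y_tilde \<theta> = c_tilde \<alpha> k \<theta> * \<gamma>"

definition n_tilde :: "real \<Rightarrow> real" where
  "n_tilde \<theta> = dU_loss \<theta> (y_tilde \<theta>)"

abbreviation "I_loss \<theta> q \<equiv> I1 \<alpha> k \<gamma> \<theta> q"

lemma U_loss_gamma_eq_U_gain_gamma: "U_loss \<theta> \<gamma> = U_gain \<theta> \<gamma>"
  unfolding U_loss_def U_gain_def by simp

lemma U_loss_deriv:
  assumes "0 < y" "y < \<gamma>"
  shows "(U_loss \<theta> has_real_derivative dU_loss \<theta> y) (at y)"
  unfolding U_loss_def dU_loss_def using assms
  by (auto intro!: derivative_eq_intros simp: algebra_simps)

lemma U_loss_cont: "continuous_on {0<..\<gamma>} (U_loss \<theta>)"
  unfolding U_loss_def using alpha_pos by (intro continuous_intros continuous_on_powr') auto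

lemma dU_loss_deriv:
  assumes "0 < y" "y < \<gamma>"
  shows "(dU_loss \<theta> has_real_derivative
    \<alpha> * (\<alpha> - 1) * (\<theta> * y powr (\<alpha> - 2) - k * (\<gamma> - y) powr (\<alpha> - 2))) (at y)"
proof -
  have "(dU_loss \<theta> has_real_derivative
      \<alpha> * (k * ((\<alpha> - 1) * (\<gamma> - y) powr (\<alpha> - 1 - 1) * (- 1)) + \<theta> * ((\<alpha> - 1) * y powr (\<alpha> - 1 - 1)))) (at y)"
    unfolding dU_loss_def using assms by (auto intro!: derivative_eq_intros)
  moreover have "\<alpha> - 1 - 1 = \<alpha> - 2" by simp
  ultimately show ?thesis by (simp add: algebra_simps)
qed

lemma dU_loss_pos: "0 < \<theta> \<Longrightarrow> 0 < y \<Longrightarrow> 0 < dU_loss \<theta> y"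
  unfolding dU_loss_def using alpha_pos k_nonneg by (simp add: add_nonneg_pos)

lemma tendsto_dU_loss_theta:
  "(\<theta>f \<longlongrightarrow> \<theta>0) F \<Longrightarrow> ((\<lambda>x. dU_loss (\<theta>f x) y) \<longlongrightarrow> dU_loss \<theta>0 y) F"
  unfolding dU_loss_def by (intro tendsto_intros)

lemma y_tilde_bounds:
  assumes "0 < \<theta>"
  shows "0 < y_tilde \<theta>" "y_tilde \<theta> \<le> \<gamma>" "0 < k \<Longrightarrow> y_tilde \<theta> < \<gamma>" "k = 0 \<Longrightarrow> y_tilde \<theta> = \<gamma>"
proof -
  define X where "X = (k / \<theta>) powr (1 / (2 - \<alpha>))"
  have X0: "0 \<le> X" unfolding X_def by simp
  have yt: "y_tilde \<theta> = \<gamma> / (1 + X)" unfolding y_tilde_def c_tilde_def X_def by simp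
  show "0 < y_tilde \<theta>" "y_tilde \<theta> \<le> \<gamma>" using X0 gamma_pos unfolding yt by (auto simp: field_simps)
  show "y_tilde \<theta> < \<gamma>" if "0 < k"
  proof -
    have "0 < X" unfolding X_def using that assms by simp
    then show ?thesis using gamma_pos unfolding yt by (simp add: field_simps)
  qed
  show "k = 0 \<Longrightarrow> y_tilde \<theta> = \<gamma>" unfolding yt X_def by simp
qed

text \<open>The point y_tilde = \<gamma> / (1 + (k / \<theta>) powr (1 / (2 - \<alpha>))) is where the two terms of the
  derivative of dU_loss balance: dU_loss decreases on (0, y_tilde] and increases on [y_tilde, \<gamma>).\<close>

lemma curvature_sign_y_tilde:
  assumes th: "0 < \<theta>" and k: "0 < k" and y: "0 < y" "y < \<gamma>"
  shows "k * (\<gamma> - y) powr (\<alpha> - 2) < \<theta> * y powr (\<alpha> - 2) \<longleftrightarrow> y < y_tilde \<theta>"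
    and "\<theta> * y powr (\<alpha> - 2) < k * (\<gamma> - y) powr (\<alpha> - 2) \<longleftrightarrow> y_tilde \<theta> < y"
proof -
  define p where "p = 2 - \<alpha>"
  define X where "X = (k / \<theta>) powr (1 / p)"
  define Z where "Z = (\<gamma> - y) / y"
  have p: "0 < p" unfolding p_def using alpha_lt_1 by simp
  have X0: "0 < X" unfolding X_def using th k by simp
  have Z0: "0 < Z" unfolding Z_def using y by simp
  have XZ: "y < y_tilde \<theta> \<longleftrightarrow> X < Z" "y_tilde \<theta> < y \<longleftrightarrow> Z < X"
    unfolding y_tilde_def c_tilde_def p_def[symmetric] X_def[symmetric] Z_def
    using X0 y by (auto simp: field_simps)
  have mono: "X < Z \<longleftrightarrow> X powr p < Z powr p" "Z < X \<longleftrightarrow> Z powr p < X powr p"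
    using powr_less_mono2[OF p, of X Z] powr_less_mono2[OF p, of Z X] X0 Z0
    by (cases X Z rule: linorder_cases; auto)+
  have Xp: "X powr p = k / \<theta>" unfolding X_def using th k p by (simp add: powr_powr)
  have Zp: "Z powr p = (\<gamma> - y) powr p / y powr p" unfolding Z_def using y by (simp add: powr_divide)
  have inv: "(\<gamma> - y) powr (\<alpha> - 2) = 1 / (\<gamma> - y) powr p" "y powr (\<alpha> - 2) = 1 / y powr p"
    unfolding p_def using powr_minus_divide[of "\<gamma> - y" "2 - \<alpha>"] powr_minus_divide[of y "2 - \<alpha>"] by simp_all
  have pos: "0 < (\<gamma> - y) powr p" "0 < y powr p" using y by simp_all
  show "k * (\<gamma> - y) powr (\<alpha> - 2) < \<theta> * y powr (\<alpha> - 2) \<longleftrightarrow> y < y_tilde \<theta>"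
    unfolding XZ mono Xp Zp inv using th pos by (simp add: field_simps)
  show "\<theta> * y powr (\<alpha> - 2) < k * (\<gamma> - y) powr (\<alpha> - 2) \<longleftrightarrow> y_tilde \<theta> < y"
    unfolding XZ mono Xp Zp inv using th pos by (simp add: field_simps)
qed

lemma dU_loss_cont:
  assumes th: "0 < \<theta>" and "0 < a" "b \<le> y_tilde \<theta>"
  shows "continuous_on {a..b} (dU_loss \<theta>)"
proof (cases "k = 0")
  case True
  have "continuous_on {a..b} (\<lambda>y. \<alpha> * (\<theta> * y powr (\<alpha> - 1)))"
    using assms by (intro continuous_intros) auto
  moreover have "dU_loss \<theta> = (\<lambda>y. \<alpha> * (\<theta> * y powr (\<alpha> - 1)))" using True unfolding dU_loss_def by auto
  ultimately show ?thesis by simp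
next
  case False
  then have "y_tilde \<theta> < \<gamma>" using y_tilde_bounds[OF th] k_nonneg by simp
  then show ?thesis using assms unfolding dU_loss_def by (intro continuous_intros) auto
qed

lemma dU_loss_less:
  assumes th: "0 < \<theta>" and y: "0 < y1" "y1 < y2" "y2 \<le> y_tilde \<theta>"
  shows "dU_loss \<theta> y2 < dU_loss \<theta> y1"
proof (rule DERIV_neg_imp_decreasing_open[OF y(2)])
  fix x assume x: "y1 < x" "x < y2"
  have xg: "x < \<gamma>" using x y y_tilde_bounds[OF th] by simp
  have "k * (\<gamma> - x) powr (\<alpha> - 2) < \<theta> * x powr (\<alpha> - 2)"
  proof (cases "k = 0")
    case False
    then show ?thesis using curvature_sign_y_tilde(1)[OF th _ _ xg] k_nonneg x y by simp
  qed (use th x y in simp)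
  moreover have "\<alpha> * (\<alpha> - 1) < 0" using alpha_pos alpha_lt_1 by (simp add: mult_pos_neg)
  ultimately have "\<alpha> * (\<alpha> - 1) * (\<theta> * x powr (\<alpha> - 2) - k * (\<gamma> - x) powr (\<alpha> - 2)) < 0"
    by (simp add: mult_neg_pos)
  then show "\<exists>d. (dU_loss \<theta> has_real_derivative d) (at x) \<and> d < 0"
    using dU_loss_deriv[of x \<theta>] x y xg by auto
qed (rule dU_loss_cont, use th y in auto)

lemma dU_loss_greater:
  assumes th: "0 < \<theta>" and k: "0 < k" and y: "y_tilde \<theta> \<le> y1" "y1 < y2" "y2 < \<gamma>"
  shows "dU_loss \<theta> y1 < dU_loss \<theta> y2"
proof (rule DERIV_pos_imp_increasing_open[OF y(2)])
  fix x assume x: "y1 < x" "x < y2"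
  have x0: "0 < x" using x y y_tilde_bounds[OF th] by simp
  have "\<theta> * x powr (\<alpha> - 2) - k * (\<gamma> - x) powr (\<alpha> - 2) < 0"
    using curvature_sign_y_tilde(2)[OF th k x0] x y by simp
  moreover have "\<alpha> * (\<alpha> - 1) < 0" using alpha_pos alpha_lt_1 by (simp add: mult_pos_neg)
  ultimately have "0 < \<alpha> * (\<alpha> - 1) * (\<theta> * x powr (\<alpha> - 2) - k * (\<gamma> - x) powr (\<alpha> - 2))"
    by (simp add: mult_neg_neg)
  then show "\<exists>d. (dU_loss \<theta> has_real_derivative d) (at x) \<and> 0 < d"
    using dU_loss_deriv[of x \<theta>] x y x0 by auto
next
  have "0 < y1" using y y_tilde_bounds[OF th] by simp
  then show "continuous_on {y1..y2} (dU_loss \<theta>)"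
    using y unfolding dU_loss_def by (intro continuous_intros) auto
qed

lemma dU_loss_le:
  assumes "0 < \<theta>" "0 < y1" "y1 \<le> y2" "y2 \<le> y_tilde \<theta>"
  shows "dU_loss \<theta> y2 \<le> dU_loss \<theta> y1"
  using dU_loss_less[OF assms(1,2), of y2] assms by (cases "y1 = y2") auto

lemma n_tilde_pos: "0 < \<theta> \<Longrightarrow> 0 < n_tilde \<theta>"
  unfolding n_tilde_def using dU_loss_pos y_tilde_bounds by simp

lemma n_tilde_le: "0 < \<theta> \<Longrightarrow> 0 < y \<Longrightarrow> y \<le> y_tilde \<theta> \<Longrightarrow> n_tilde \<theta> \<le> dU_loss \<theta> y"
  unfolding n_tilde_def by (rule dU_loss_le) auto

lemma n_tilde_less: "0 < \<theta> \<Longrightarrow> 0 < y \<Longrightarrow> y < y_tilde \<theta> \<Longrightarrow> n_tilde \<theta> < dU_loss \<theta> y"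
  unfolding n_tilde_def by (rule dU_loss_less) auto

lemma ex1_dU_loss_eq:
  assumes th: "0 < \<theta>" and q: "n_tilde \<theta> \<le> q"
  shows "\<exists>!y. y \<in> {0<..y_tilde \<theta>} \<and> dU_loss \<theta> y = q"
proof -
  have q0: "0 < q" using n_tilde_pos[OF th] q by simp
  define w where "w = (q / (\<alpha> * \<theta>)) powr (1 / (\<alpha> - 1))"
  have w0: "0 < q / (\<alpha> * \<theta>)" using q0 alpha_pos th by simp
  have w: "0 < w" unfolding w_def using w0 by (metis powr_gt_zero less_irrefl)
  define ys where "ys = min (y_tilde \<theta>) w"
  have ys: "0 < ys" "ys \<le> y_tilde \<theta>" "ys \<le> w" unfolding ys_def using w y_tilde_bounds[OF th] by auto
  have "w powr (\<alpha> - 1) \<le> ys powr (\<alpha> - 1)"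
    using powr_mono2'[of "\<alpha> - 1" ys w] alpha_lt_1 ys by simp
  moreover have "w powr (\<alpha> - 1) = q / (\<alpha> * \<theta>)"
    unfolding w_def by (rule powr_alpha_inverse[OF w0])
  ultimately have "q \<le> \<alpha> * (\<theta> * ys powr (\<alpha> - 1))" using alpha_pos th by (simp add: field_simps)
  moreover have "0 \<le> \<alpha> * (k * (\<gamma> - ys) powr (\<alpha> - 1))" using alpha_pos k_nonneg by simp
  ultimately have "q \<le> dU_loss \<theta> ys" unfolding dU_loss_def by (simp add: distrib_left)
  moreover have "strict_antimono_on {0<..y_tilde \<theta>} (dU_loss \<theta>)"
    by (rule monotone_onI) (auto intro: dU_loss_less[OF th])
  ultimately show ?thesis
    using q ys unfolding n_tilde_def
    by (intro ex1_root_strict_antimono[OF ys(2)] dU_loss_cont[OF th]) auto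
qed

lemma I_loss_bounds: "0 < \<theta> \<Longrightarrow> n_tilde \<theta> \<le> q \<Longrightarrow> 0 < I_loss \<theta> q \<and> I_loss \<theta> q \<le> y_tilde \<theta>"
  and dU_loss_I_loss: "0 < \<theta> \<Longrightarrow> n_tilde \<theta> \<le> q \<Longrightarrow> dU_loss \<theta> (I_loss \<theta> q) = q"
  using theI'[OF ex1_dU_loss_eq, of \<theta> q] unfolding I1_def dU_loss_def y_tilde_def by auto

lemma I_loss_eq:
  assumes th: "0 < \<theta>" and y: "0 < y" "y \<le> y_tilde \<theta>" "dU_loss \<theta> y = q"
  shows "I_loss \<theta> q = y"
proof -
  have q: "n_tilde \<theta> \<le> q" using n_tilde_le[OF th y(1,2)] y by simp
  show ?thesis using ex1_dU_loss_eq[OF th q] I_loss_bounds[OF th q] dU_loss_I_loss[OF th q] y by auto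
qed

lemma I_loss_less_y_tilde:
  assumes th: "0 < \<theta>" and q: "n_tilde \<theta> < q"
  shows "I_loss \<theta> q < y_tilde \<theta>"
  using I_loss_bounds[OF th] dU_loss_I_loss[OF th] q unfolding n_tilde_def
  by (metis order.order_iff_strict order.strict_iff_not)

lemma I_loss_less:
  assumes th: "0 < \<theta>" and q: "n_tilde \<theta> \<le> q1" "q1 < q2"
  shows "I_loss \<theta> q2 < I_loss \<theta> q1"
proof (rule ccontr)
  assume "\<not> ?thesis"
  then have "dU_loss \<theta> (I_loss \<theta> q1) \<ge> dU_loss \<theta> (I_loss \<theta> q2)"
    using q I_loss_bounds[OF th] by (intro dU_loss_le[OF th]) auto
  then show False using q dU_loss_I_loss[OF th] by force
qed

lemma tendsto_y_tilde:
  assumes th: "(\<theta>f \<longlongrightarrow> \<theta>0) F" and t0: "0 < \<theta>0"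
  shows "((\<lambda>x. y_tilde (\<theta>f x)) \<longlongrightarrow> y_tilde \<theta>0) F"
proof (cases "k = 0")
  case False
  then have k: "0 < k" using k_nonneg by simp
  have "((\<lambda>x. k / \<theta>f x) \<longlongrightarrow> k / \<theta>0) F" using t0 by (intro tendsto_divide tendsto_const th) auto
  then have "((\<lambda>x. (k / \<theta>f x) powr (1 / (2 - \<alpha>))) \<longlongrightarrow> (k / \<theta>0) powr (1 / (2 - \<alpha>))) F"
    by (rule tendsto_powr[OF _ tendsto_const]) (use k t0 in simp)
  moreover have "1 + (k / \<theta>0) powr (1 / (2 - \<alpha>)) \<noteq> 0"
    by (metis add_pos_nonneg powr_ge_zero zero_less_one less_irrefl)
  ultimately show ?thesis unfolding y_tilde_def c_tilde_def
    by (intro tendsto_mult tendsto_divide tendsto_add tendsto_const)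
next
  case True
  then have "y_tilde t = \<gamma>" for t unfolding y_tilde_def c_tilde_def by simp
  then show ?thesis by simp
qed

lemma tendsto_n_tilde:
  assumes th: "(\<theta>f \<longlongrightarrow> \<theta>0) F" and t0: "0 < \<theta>0"
  shows "((\<lambda>x. n_tilde (\<theta>f x)) \<longlongrightarrow> n_tilde \<theta>0) F"
proof (cases "k = 0")
  case True
  then show ?thesis unfolding n_tilde_def dU_loss_def y_tilde_def c_tilde_def
    by (auto intro!: tendsto_intros th)
next
  case False
  then have b: "0 < y_tilde \<theta>0" "y_tilde \<theta>0 < \<gamma>" using y_tilde_bounds[OF t0] k_nonneg by auto
  show ?thesis unfolding n_tilde_def dU_loss_def
    using b by (intro tendsto_intros tendsto_y_tilde[OF th t0] th) auto
qed

text \<open>When q0 = n_tilde \<theta>0 the root sits at the end y_tilde of the decreasing branch of dU_loss;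
  then the bound comes from I_loss \<le> y_tilde and the continuity of y_tilde in \<theta>.\<close>

lemma eventually_I_loss_lt:
  assumes th: "(\<theta>f \<longlongrightarrow> \<theta>0) F" and qq: "(qf \<longlongrightarrow> q0) F" and t0: "0 < \<theta>0"
    and q0: "n_tilde \<theta>0 \<le> q0" and ev: "\<forall>\<^sub>F x in F. 0 < \<theta>f x \<and> n_tilde (\<theta>f x) \<le> qf x"
    and b: "I_loss \<theta>0 q0 < b"
  shows "\<forall>\<^sub>F x in F. I_loss (\<theta>f x) (qf x) < b"
proof -
  define y0 where "y0 = I_loss \<theta>0 q0"
  have y0: "0 < y0" "y0 \<le> y_tilde \<theta>0" "dU_loss \<theta>0 y0 = q0"
    using I_loss_bounds[OF t0 q0] dU_loss_I_loss[OF t0 q0] unfolding y0_def by auto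
  show ?thesis
  proof (cases "y0 < y_tilde \<theta>0")
    case True
    show ?thesis
    proof (rule eventually_root_lt[OF True b[folded y0_def] qq tendsto_dU_loss_theta[OF th]])
      fix c assume c: "y0 < c" "c < y_tilde \<theta>0"
      show "dU_loss \<theta>0 c < q0" using dU_loss_less[OF t0 y0(1) c(1)] c y0 by simp
      show "\<forall>\<^sub>F x in F. dU_loss (\<theta>f x) c < qf x \<longrightarrow> I_loss (\<theta>f x) (qf x) < c"
        using ev
      proof eventually_elim
        case (elim x)
        then show ?case
          using I_loss_bounds dU_loss_I_loss dU_loss_le[of "\<theta>f x" c "I_loss (\<theta>f x) (qf x)"] c y0
          by (force simp: not_less[symmetric])
      qed
    qed
  next
    case False
    then have "y0 = y_tilde \<theta>0" using y0 by simp
    then have "\<forall>\<^sub>F x in F. y_tilde (\<theta>f x) < b"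
      using order_tendstoD(2)[OF tendsto_y_tilde[OF th t0], of b] b unfolding y0_def by simp
    with ev show ?thesis by eventually_elim (use I_loss_bounds in fastforce)
  qed
qed

lemma tendsto_I_loss:
  assumes th: "(\<theta>f \<longlongrightarrow> \<theta>0) F" and qq: "(qf \<longlongrightarrow> q0) F" and t0: "0 < \<theta>0"
    and q0: "n_tilde \<theta>0 \<le> q0" and ev: "\<forall>\<^sub>F x in F. 0 < \<theta>f x \<and> n_tilde (\<theta>f x) \<le> qf x"
  shows "((\<lambda>x. I_loss (\<theta>f x) (qf x)) \<longlongrightarrow> I_loss \<theta>0 q0) F"
proof (rule order_tendstoI)
  define y0 where "y0 = I_loss \<theta>0 q0"
  have y0: "0 < y0" "y0 \<le> y_tilde \<theta>0" "dU_loss \<theta>0 y0 = q0"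
    using I_loss_bounds[OF t0 q0] dU_loss_I_loss[OF t0 q0] unfolding y0_def by auto
  show "\<forall>\<^sub>F x in F. a < I_loss (\<theta>f x) (qf x)" if "a < I_loss \<theta>0 q0" for a
  proof (rule eventually_root_gt[OF y0(1) that[folded y0_def] qq tendsto_dU_loss_theta[OF th]])
    fix c assume c: "0 < c" "c < y0"
    show "q0 < dU_loss \<theta>0 c" using dU_loss_less[OF t0 c] y0 by simp
    have "c < y_tilde \<theta>0" using c y0 by simp
    from ev order_tendstoD(1)[OF tendsto_y_tilde[OF th t0] this]
    show "\<forall>\<^sub>F x in F. qf x < dU_loss (\<theta>f x) c \<longrightarrow> c < I_loss (\<theta>f x) (qf x)"
    proof eventually_elim
      case (elim x)
      then show ?case
        using I_loss_bounds dU_loss_I_loss dU_loss_le[of "\<theta>f x" "I_loss (\<theta>f x) (qf x)" c] c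
        by (force simp: not_less[symmetric])
    qed
  qed
qed (rule eventually_I_loss_lt[OF assms])

section \<open>The concavification threshold\<close>

definition conj_loss :: "real \<Rightarrow> real \<Rightarrow> real" where
  "conj_loss \<theta> q = U_loss \<theta> (I_loss \<theta> q) - q * I_loss \<theta> q"

definition conj_gap :: "real \<Rightarrow> real \<Rightarrow> real" where
  "conj_gap \<theta> q = conj_gain \<theta> q - conj_loss \<theta> q"

lemma conj_gain_gt_gamma:
  assumes q: "0 < q"
  shows "U_gain \<theta> \<gamma> - q * \<gamma> < conj_gain \<theta> q"
proof -
  define y where "y = I_gain \<theta> q"
  have y: "\<gamma> < y" "dU_gain \<theta> y = q" using I_gain_gt dU_gain_I_gain q unfolding y_def by auto
  have "q * (y - \<gamma>) < U_gain \<theta> y - U_gain \<theta> \<gamma>"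
  proof (rule diff_gt_of_deriv_gt[OF y(1)])
    show "continuous_on {\<gamma>..y} (U_gain \<theta>)" by (rule continuous_on_subset[OF U_gain_cont]) auto
    fix x assume x: "\<gamma> < x" "x < y"
    show "(U_gain \<theta> has_real_derivative dU_gain \<theta> x) (at x)" by (rule U_gain_deriv) (use x in auto)
    show "q < dU_gain \<theta> x" using dU_gain_less[OF x, of \<theta>] y q by simp
  qed
  then show ?thesis unfolding conj_gain_def y_def[symmetric] by (simp add: algebra_simps)
qed

lemma conj_loss_step:
  assumes th: "0 < \<theta>" and q: "n_tilde \<theta> \<le> q1" "q1 < q2"
  shows "conj_loss \<theta> q1 - (q2 - q1) * I_loss \<theta> q1 \<le> conj_loss \<theta> q2"
proof -
  have q2: "n_tilde \<theta> \<le> q2" using q by simp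
  define x1 where "x1 = I_loss \<theta> q1"
  define x2 where "x2 = I_loss \<theta> q2"
  have x1: "0 < x1" "x1 \<le> y_tilde \<theta>"
    using I_loss_bounds[OF th q(1)] unfolding x1_def by auto
  have x2: "0 < x2" "dU_loss \<theta> x2 = q2"
    using I_loss_bounds[OF th q2] dU_loss_I_loss[OF th q2] unfolding x2_def by auto
  have lt: "x2 < x1" using I_loss_less[OF th q] unfolding x1_def x2_def .
  have ytg: "y_tilde \<theta> \<le> \<gamma>" using y_tilde_bounds[OF th] by simp
  have "U_loss \<theta> x1 - U_loss \<theta> x2 \<le> q2 * (x1 - x2)"
  proof (rule diff_le_of_deriv_le)
    show "x2 \<le> x1" using lt by simp
    show "continuous_on {x2..x1} (U_loss \<theta>)"
      by (rule continuous_on_subset[OF U_loss_cont]) (use x1 x2 ytg in auto)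
    fix x assume x: "x2 < x" "x < x1"
    show "(U_loss \<theta> has_real_derivative dU_loss \<theta> x) (at x)"
      by (rule U_loss_deriv) (use x x1 x2 ytg in auto)
    show "dU_loss \<theta> x \<le> q2" using dU_loss_less[OF th x2(1) x(1)] x x1 x2 by auto
  qed
  then show ?thesis unfolding conj_loss_def x1_def[symmetric] x2_def[symmetric] by (simp add: algebra_simps)
qed

lemma conj_gap_less:
  assumes th: "0 < \<theta>" and q: "n_tilde \<theta> \<le> q1" "q1 < q2"
  shows "conj_gap \<theta> q2 < conj_gap \<theta> q1"
proof -
  have q10: "0 < q1" using n_tilde_pos[OF th] q by simp
  have "I_loss \<theta> q1 \<le> y_tilde \<theta>" "y_tilde \<theta> \<le> \<gamma>" "\<gamma> < I_gain \<theta> q2"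
    using I_loss_bounds[OF th q(1)] y_tilde_bounds[OF th] I_gain_gt[of q2 \<theta>] q10 q by auto
  then have "I_loss \<theta> q1 < I_gain \<theta> q2" by linarith
  then have "(q2 - q1) * I_loss \<theta> q1 < (q2 - q1) * I_gain \<theta> q2"
    using q by (intro mult_strict_left_mono) auto
  then show ?thesis using conj_loss_step[OF th q] conj_gain_step[OF q10 q(2), of \<theta>] unfolding conj_gap_def by linarith
qed

text \<open>At q = n_tilde the loss branch sits at its boundary point y_tilde, and U_loss lies below the
  tangent of slope n_tilde there up to \<gamma>, where U_loss and U_gain meet.\<close>

lemma conj_loss_n_tilde_le:
  assumes th: "0 < \<theta>"
  shows "conj_loss \<theta> (n_tilde \<theta>) \<le> U_gain \<theta> \<gamma> - n_tilde \<theta> * \<gamma>"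
proof -
  define n where "n = n_tilde \<theta>"
  have "I_loss \<theta> n = y_tilde \<theta>"
    by (rule I_loss_eq[OF th]) (use y_tilde_bounds[OF th] in \<open>auto simp: n_def n_tilde_def\<close>)
  then have conj: "conj_loss \<theta> n = U_loss \<theta> (y_tilde \<theta>) - n * y_tilde \<theta>" unfolding conj_loss_def by simp
  show ?thesis
  proof (cases "k = 0")
    case True
    then show ?thesis using y_tilde_bounds[OF th] U_loss_gamma_eq_U_gain_gamma conj n_def by simp
  next
    case False
    then have k: "0 < k" using k_nonneg by simp
    have ytg: "0 < y_tilde \<theta>" "y_tilde \<theta> < \<gamma>" using y_tilde_bounds[OF th] k by auto
    have "n * (\<gamma> - y_tilde \<theta>) \<le> U_loss \<theta> \<gamma> - U_loss \<theta> (y_tilde \<theta>)"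
    proof (rule diff_ge_of_deriv_ge)
      show "continuous_on {y_tilde \<theta>..\<gamma>} (U_loss \<theta>)"
        by (rule continuous_on_subset[OF U_loss_cont]) (use ytg in auto)
      fix x assume x: "y_tilde \<theta> < x" "x < \<gamma>"
      show "(U_loss \<theta> has_real_derivative dU_loss \<theta> x) (at x)"
        by (rule U_loss_deriv) (use x ytg in auto)
      show "n \<le> dU_loss \<theta> x"
        using dU_loss_greater[OF th k order.refl x] unfolding n_def n_tilde_def by simp
    qed (use ytg in simp)
    then show ?thesis using U_loss_gamma_eq_U_gain_gamma conj unfolding n_def by (simp add: algebra_simps)
  qed
qed

lemma conj_gap_n_tilde_pos: "0 < \<theta> \<Longrightarrow> 0 < conj_gap \<theta> (n_tilde \<theta>)"
  using conj_loss_n_tilde_le[of \<theta>] conj_gain_gt_gamma[OF n_tilde_pos, of \<theta> \<theta>] unfolding conj_gap_def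
  by linarith

lemma conj_loss_ge:
  assumes th: "0 < \<theta>" and Q: "n_tilde \<theta> \<le> Q"
  shows "- k * \<gamma> powr \<alpha> - \<alpha> * (k * (\<gamma> - y_tilde \<theta>) powr (\<alpha> - 1) * \<gamma> + \<theta> * \<gamma> powr \<alpha>)
    \<le> conj_loss \<theta> Q"
proof -
  define x where "x = I_loss \<theta> Q"
  have x: "0 < x" "x \<le> y_tilde \<theta>" "dU_loss \<theta> x = Q"
    using I_loss_bounds[OF th Q] dU_loss_I_loss[OF th Q] unfolding x_def by auto
  have xg: "x \<le> \<gamma>" using x y_tilde_bounds[OF th] by simp
  have "(\<gamma> - x) powr \<alpha> \<le> \<gamma> powr \<alpha>" using x xg alpha_pos by (intro powr_mono2) auto
  then have "k * (\<gamma> - x) powr \<alpha> \<le> k * \<gamma> powr \<alpha>" using k_nonneg by (intro mult_left_mono) auto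
  moreover have "0 \<le> \<theta> * x powr \<alpha>" using th by simp
  ultimately have U: "- k * \<gamma> powr \<alpha> \<le> U_loss \<theta> x" unfolding U_loss_def by simp
  have kb: "k * (\<gamma> - x) powr (\<alpha> - 1) \<le> k * (\<gamma> - y_tilde \<theta>) powr (\<alpha> - 1)"
  proof (cases "k = 0")
    case False
    then have "y_tilde \<theta> < \<gamma>" using y_tilde_bounds[OF th] k_nonneg by simp
    then have "(\<gamma> - x) powr (\<alpha> - 1) \<le> (\<gamma> - y_tilde \<theta>) powr (\<alpha> - 1)"
      using powr_mono2'[of "\<alpha> - 1" "\<gamma> - y_tilde \<theta>" "\<gamma> - x"] alpha_lt_1 x by simp
    then show ?thesis using k_nonneg by (intro mult_left_mono) auto
  qed simp
  have "Q * x = dU_loss \<theta> x * x" using x(3) by simp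
  also have "\<dots> = \<alpha> * (k * (\<gamma> - x) powr (\<alpha> - 1) * x + \<theta> * (x * x powr (\<alpha> - 1)))"
    unfolding dU_loss_def by (simp add: algebra_simps)
  also have "x * x powr (\<alpha> - 1) = x powr \<alpha>" using powr_alpha_split[OF x(1)] by simp
  finally have Qx: "Q * x = \<alpha> * (k * (\<gamma> - x) powr (\<alpha> - 1) * x + \<theta> * x powr \<alpha>)" .
  have "k * (\<gamma> - x) powr (\<alpha> - 1) * x \<le> k * (\<gamma> - y_tilde \<theta>) powr (\<alpha> - 1) * \<gamma>"
    by (rule mult_mono[OF kb xg]) (use k_nonneg x in auto)
  moreover have "\<theta> * x powr \<alpha> \<le> \<theta> * \<gamma> powr \<alpha>"
    using x xg alpha_pos th by (intro mult_left_mono powr_mono2) auto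
  ultimately have "Q * x \<le> \<alpha> * (k * (\<gamma> - y_tilde \<theta>) powr (\<alpha> - 1) * \<gamma> + \<theta> * \<gamma> powr \<alpha>)"
    unfolding Qx using alpha_pos by (intro mult_left_mono) auto
  then show ?thesis unfolding conj_loss_def x_def[symmetric] using U by simp
qed

lemma conj_gap_neg_large:
  assumes th: "0 < \<theta>"
  shows "\<exists>Q. n_tilde \<theta> \<le> Q \<and> conj_gap \<theta> Q < 0"
proof -
  define C where "C = \<alpha> * (k * (\<gamma> - y_tilde \<theta>) powr (\<alpha> - 1) * \<gamma> + \<theta> * \<gamma> powr \<alpha>)"
  define Q where "Q = max (n_tilde \<theta>) ((1 + \<theta>) * \<gamma> powr (\<alpha> - 1) + (k * \<gamma> powr \<alpha> + C + 1) / \<gamma>)"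
  have Qn: "n_tilde \<theta> \<le> Q" unfolding Q_def by simp
  have C0: "0 \<le> C" unfolding C_def using alpha_pos k_nonneg th gamma_pos
    by (intro mult_nonneg_nonneg add_nonneg_nonneg) auto
  have Q1: "(1 + \<theta>) * \<gamma> powr (\<alpha> - 1) + (k * \<gamma> powr \<alpha> + C + 1) / \<gamma> \<le> Q" unfolding Q_def by simp
  moreover have "0 \<le> (k * \<gamma> powr \<alpha> + C + 1) / \<gamma>" using C0 k_nonneg gamma_pos by simp
  ultimately have "conj_gain \<theta> Q \<le> \<gamma> * ((1 + \<theta>) * \<gamma> powr (\<alpha> - 1) - Q)"
    using th by (intro conj_gain_le) auto
  also have "\<dots> \<le> - (k * \<gamma> powr \<alpha> + C + 1)"
    using Q1 gamma_pos by (simp add: field_simps)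
  finally have "conj_gap \<theta> Q < 0" using conj_loss_ge[OF th Qn] unfolding conj_gap_def C_def by linarith
  then show ?thesis using Qn by blast
qed

lemma tendsto_gap:
  assumes th: "(\<theta>f \<longlongrightarrow> \<theta>0) F" and qq: "(qf \<longlongrightarrow> q0) F" and t0: "0 < \<theta>0"
    and q0: "n_tilde \<theta>0 \<le> q0" and ev: "\<forall>\<^sub>F x in F. 0 < \<theta>f x \<and> n_tilde (\<theta>f x) \<le> qf x"
  shows "((\<lambda>x. conj_gap (\<theta>f x) (qf x)) \<longlongrightarrow> conj_gap \<theta>0 q0) F"
proof -
  have I: "((\<lambda>x. I_loss (\<theta>f x) (qf x)) \<longlongrightarrow> I_loss \<theta>0 q0) F" by (rule tendsto_I_loss[OF th qq t0 q0 ev])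
  have y0: "0 < I_loss \<theta>0 q0" using I_loss_bounds[OF t0 q0] by simp
  have evn: "\<forall>\<^sub>F x in F. 0 \<le> \<gamma> - I_loss (\<theta>f x) (qf x)"
    using ev
  proof eventually_elim
    case (elim x)
    then have "I_loss (\<theta>f x) (qf x) \<le> y_tilde (\<theta>f x)" "y_tilde (\<theta>f x) \<le> \<gamma>"
      using I_loss_bounds y_tilde_bounds by auto
    then show ?case by simp
  qed
  have P1: "((\<lambda>x. (\<gamma> - I_loss (\<theta>f x) (qf x)) powr \<alpha>) \<longlongrightarrow> (\<gamma> - I_loss \<theta>0 q0) powr \<alpha>) F"
    by (intro tendsto_powr2 tendsto_diff tendsto_const I evn alpha_pos)
  have P2: "((\<lambda>x. I_loss (\<theta>f x) (qf x) powr \<alpha>) \<longlongrightarrow> I_loss \<theta>0 q0 powr \<alpha>) F"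
    by (rule tendsto_powr[OF I tendsto_const]) (use y0 in simp)
  have "((\<lambda>x. conj_loss (\<theta>f x) (qf x)) \<longlongrightarrow> conj_loss \<theta>0 q0) F"
    unfolding conj_loss_def U_loss_def by (intro tendsto_diff tendsto_add tendsto_mult tendsto_const P1 P2 th qq I)
  moreover have "((\<lambda>x. conj_gain (\<theta>f x) (qf x)) \<longlongrightarrow> conj_gain \<theta>0 q0) F"
    by (rule tendsto_conj_gain[OF th qq]) (use n_tilde_pos[OF t0] q0 in simp)
  ultimately show ?thesis unfolding conj_gap_def by (intro tendsto_diff)
qed

lemma conj_gap_cont: "0 < \<theta> \<Longrightarrow> continuous_on {n_tilde \<theta>..} (conj_gap \<theta>)"
  unfolding continuous_on_def
proof
  fix q assume th: "0 < \<theta>" and q: "q \<in> {n_tilde \<theta>..}"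
  have "\<forall>\<^sub>F x in at q within {n_tilde \<theta>..}. 0 < \<theta> \<and> n_tilde \<theta> \<le> x"
    using th by (auto simp: eventually_at_filter)
  then show "(conj_gap \<theta> \<longlongrightarrow> conj_gap \<theta> q) (at q within {n_tilde \<theta>..})"
    using tendsto_gap[OF tendsto_const tendsto_ident_at th] q by simp
qed

lemma ex1_gap_root:
  assumes th: "0 < \<theta>"
  shows "\<exists>!q. q \<in> {n_tilde \<theta>..} \<and> conj_gap \<theta> q = 0"
proof -
  obtain Q where Q: "n_tilde \<theta> \<le> Q" "conj_gap \<theta> Q < 0" using conj_gap_neg_large[OF th] by blast
  have anti: "strict_antimono_on {n_tilde \<theta>..} (conj_gap \<theta>)"
    by (rule monotone_onI) (auto intro: conj_gap_less[OF th])
  show ?thesis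
    by (rule ex1_root_strict_antimono[OF Q(1) _ continuous_on_subset[OF conj_gap_cont[OF th]] _ _ anti])
       (use Q conj_gap_n_tilde_pos[OF th] in auto)
qed

definition m1_root :: "real \<Rightarrow> real" where
  "m1_root \<theta> = (THE q. q \<in> {n_tilde \<theta>..} \<and> conj_gap \<theta> q = 0)"

lemma m1_root:
  assumes th: "0 < \<theta>"
  shows "n_tilde \<theta> < m1_root \<theta>" "conj_gap \<theta> (m1_root \<theta>) = 0"
proof -
  have s: "n_tilde \<theta> \<le> m1_root \<theta> \<and> conj_gap \<theta> (m1_root \<theta>) = 0"
    using theI'[OF ex1_gap_root[OF th]] unfolding m1_root_def by simp
  then show "conj_gap \<theta> (m1_root \<theta>) = 0" by simp
  show "n_tilde \<theta> < m1_root \<theta>" using s conj_gap_n_tilde_pos[OF th] by (cases "m1_root \<theta> = n_tilde \<theta>") auto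
qed

lemma m1_root_unique:
  assumes th: "0 < \<theta>" and "n_tilde \<theta> \<le> q" "conj_gap \<theta> q = 0"
  shows "m1_root \<theta> = q"
proof -
  have "m1_root \<theta> \<in> {n_tilde \<theta>..} \<and> conj_gap \<theta> (m1_root \<theta>) = 0" using m1_root[OF th] by simp
  moreover have "q \<in> {n_tilde \<theta>..} \<and> conj_gap \<theta> q = 0" using assms by simp
  ultimately show ?thesis using ex1_gap_root[OF th] by blast
qed

lemma m1_root_pos: "0 < \<theta> \<Longrightarrow> 0 < m1_root \<theta>"
  using m1_root(1) n_tilde_pos by (meson order.strict_trans)

lemma tendsto_m1_root:
  assumes th: "(\<theta>f \<longlongrightarrow> \<theta>0) F" and t0: "0 < \<theta>0"
  shows "((\<lambda>x. m1_root (\<theta>f x)) \<longlongrightarrow> m1_root \<theta>0) F"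
proof -
  have s0: "n_tilde \<theta>0 < m1_root \<theta>0" "conj_gap \<theta>0 (m1_root \<theta>0) = 0" using m1_root[OF t0] by auto
  have evt: "\<forall>\<^sub>F x in F. 0 < \<theta>f x" using order_tendstoD(1)[OF th t0] .
  have evn: "\<forall>\<^sub>F x in F. 0 < \<theta>f x \<and> n_tilde (\<theta>f x) < c" if "n_tilde \<theta>0 < c" for c
    using evt order_tendstoD(2)[OF tendsto_n_tilde[OF th t0] that] by eventually_elim simp
  show ?thesis
  proof (rule tendsto_root_antimono[OF s0(1) less_add_one tendsto_const])
    fix c assume c: "n_tilde \<theta>0 < c"
    show "((\<lambda>x. conj_gap (\<theta>f x) c) \<longlongrightarrow> conj_gap \<theta>0 c) F"
      using evn[OF c] c by (intro tendsto_gap[OF th tendsto_const t0]) (auto elim: eventually_mono)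
    show "c < m1_root \<theta>0 \<Longrightarrow> 0 < conj_gap \<theta>0 c" using conj_gap_less[OF t0, of c "m1_root \<theta>0"] c s0 by auto
    show "\<forall>\<^sub>F x in F. (0 < conj_gap (\<theta>f x) c \<longrightarrow> c < m1_root (\<theta>f x)) \<and>
        (conj_gap (\<theta>f x) c < 0 \<longrightarrow> m1_root (\<theta>f x) < c)"
      using evn[OF c]
    proof eventually_elim
      case (elim x)
      have r: "n_tilde (\<theta>f x) < m1_root (\<theta>f x)" "conj_gap (\<theta>f x) (m1_root (\<theta>f x)) = 0"
        using m1_root elim by auto
      have "conj_gap (\<theta>f x) c \<le> 0" if "m1_root (\<theta>f x) \<le> c"
        using conj_gap_less[of "\<theta>f x" "m1_root (\<theta>f x)" c] that r elim by (cases "m1_root (\<theta>f x) = c") auto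
      moreover have "0 \<le> conj_gap (\<theta>f x) c" if "c \<le> m1_root (\<theta>f x)"
        using conj_gap_less[of "\<theta>f x" c "m1_root (\<theta>f x)"] that r elim by (cases "m1_root (\<theta>f x) = c") auto
      ultimately show ?case by linarith
    qed
  next
    fix c assume "m1_root \<theta>0 < c"
    then show "conj_gap \<theta>0 c < 0" using conj_gap_less[OF t0, of "m1_root \<theta>0" c] s0 by simp
  qed
qed

text \<open>The constants c1, c2, c3 of the paper refer to the utility rescaled to \<gamma> = 1;
  the following identities undo that scaling.\<close>

lemma gamma_powr_split: "\<gamma> powr \<alpha> = \<gamma> * \<gamma> powr (\<alpha> - 1)"
  using powr_alpha_split[OF gamma_pos] .

lemma dU_gain_rescaled:
  "\<alpha> * ((y / \<gamma> - 1) powr (\<alpha> - 1) + \<theta> * (y / \<gamma>) powr (\<alpha> - 1)) = dU_gain \<theta> y / \<gamma> powr (\<alpha> - 1)"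
proof -
  have e: "y / \<gamma> - 1 = (y - \<gamma>) / \<gamma>" using gamma_pos by (simp add: field_simps)
  have gp: "0 < \<gamma> powr (\<alpha> - 1)" using gamma_pos by simp
  show ?thesis unfolding e dU_gain_def powr_divide using gp by (simp add: field_simps)
qed

lemma dU_loss_rescaled:
  "\<alpha> * (k * (1 - x / \<gamma>) powr (\<alpha> - 1) + \<theta> * (x / \<gamma>) powr (\<alpha> - 1)) = dU_loss \<theta> x / \<gamma> powr (\<alpha> - 1)"
proof -
  have e: "1 - x / \<gamma> = (\<gamma> - x) / \<gamma>" using gamma_pos by (simp add: field_simps)
  have gp: "0 < \<gamma> powr (\<alpha> - 1)" using gamma_pos by simp
  show ?thesis unfolding e dU_loss_def powr_divide using gp by (simp add: field_simps)
qed

lemma chord_rescaled: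
  "((y / \<gamma> - 1) powr \<alpha> + \<theta> * (y / \<gamma>) powr \<alpha> + k * (1 - x / \<gamma>) powr \<alpha> - \<theta> * (x / \<gamma>) powr \<alpha>)
     / (y / \<gamma> - x / \<gamma>) = (U_gain \<theta> y - U_loss \<theta> x) / (y - x) / \<gamma> powr (\<alpha> - 1)"
proof -
  have e1: "y / \<gamma> - 1 = (y - \<gamma>) / \<gamma>" using gamma_pos by (simp add: field_simps)
  have e2: "1 - x / \<gamma> = (\<gamma> - x) / \<gamma>" using gamma_pos by (simp add: field_simps)
  have e3: "y / \<gamma> - x / \<gamma> = (y - x) / \<gamma>" using gamma_pos by (simp add: field_simps)
  have num: "(y / \<gamma> - 1) powr \<alpha> + \<theta> * (y / \<gamma>) powr \<alpha> + k * (1 - x / \<gamma>) powr \<alpha> - \<theta> * (x / \<gamma>) powr \<alpha>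
      = (U_gain \<theta> y - U_loss \<theta> x) / \<gamma> powr \<alpha>"
    unfolding e1 e2 U_gain_def U_loss_def powr_divide using gamma_pos by (simp add: field_simps)
  have gp: "0 < \<gamma> powr (\<alpha> - 1)" using gamma_pos by simp
  have "(U_gain \<theta> y - U_loss \<theta> x) / (\<gamma> * \<gamma> powr (\<alpha> - 1)) / ((y - x) / \<gamma>)
      = (U_gain \<theta> y - U_loss \<theta> x) / (y - x) / \<gamma> powr (\<alpha> - 1)"
  proof (cases "y - x = 0")
    case True then show ?thesis by simp
  next
    case False then show ?thesis using gamma_pos gp by (simp add: field_simps)
  qed
  then show ?thesis unfolding num e3 gamma_powr_split .
qed

definition c12_cond :: "real \<Rightarrow> real \<times> real \<Rightarrow> bool" where
  "c12_cond \<theta> p \<longleftrightarrow> 0 < fst p \<and> fst p < c_tilde \<alpha> k \<theta> \<and> 1 < snd p \<and>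
      ((snd p - 1) powr \<alpha> + \<theta> * snd p powr \<alpha> + k * (1 - fst p) powr \<alpha> - \<theta> * fst p powr \<alpha>)
          / (snd p - fst p)
        = \<alpha> * ((snd p - 1) powr (\<alpha> - 1) + \<theta> * snd p powr (\<alpha> - 1)) \<and>
      \<alpha> * ((snd p - 1) powr (\<alpha> - 1) + \<theta> * snd p powr (\<alpha> - 1))
        = \<alpha> * (k * (1 - fst p) powr (\<alpha> - 1) + \<theta> * fst p powr (\<alpha> - 1))"

lemma c12_cond_iff:
  "c12_cond \<theta> (x / \<gamma>, y / \<gamma>) \<longleftrightarrow> 0 < x \<and> x < y_tilde \<theta> \<and> \<gamma> < y \<and>
     (U_gain \<theta> y - U_loss \<theta> x) / (y - x) = dU_gain \<theta> y \<and> dU_gain \<theta> y = dU_loss \<theta> x"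
proof -
  have gp: "0 < \<gamma> powr (\<alpha> - 1)" using gamma_pos by simp
  have a: "0 < x / \<gamma> \<longleftrightarrow> 0 < x" using gamma_pos by (simp add: zero_less_divide_iff)
  have b: "x / \<gamma> < c_tilde \<alpha> k \<theta> \<longleftrightarrow> x < y_tilde \<theta>" unfolding y_tilde_def using gamma_pos by (simp add: divide_less_eq)
  have c: "1 < y / \<gamma> \<longleftrightarrow> \<gamma> < y" using gamma_pos by (simp add: less_divide_eq)
  have d: "(U_gain \<theta> y - U_loss \<theta> x) / (y - x) / \<gamma> powr (\<alpha> - 1) = dU_gain \<theta> y / \<gamma> powr (\<alpha> - 1)
     \<longleftrightarrow> (U_gain \<theta> y - U_loss \<theta> x) / (y - x) = dU_gain \<theta> y" using gp by (subst divide_cancel_right) simp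
  have e: "dU_gain \<theta> y / \<gamma> powr (\<alpha> - 1) = dU_loss \<theta> x / \<gamma> powr (\<alpha> - 1) \<longleftrightarrow> dU_gain \<theta> y = dU_loss \<theta> x"
    using gp by (subst divide_cancel_right) simp
  show ?thesis unfolding c12_cond_def fst_conv snd_conv dU_gain_rescaled dU_loss_rescaled chord_rescaled a b c d e ..
qed

lemma c12_cond_root:
  assumes th: "0 < \<theta>"
  shows "c12_cond \<theta> (I_loss \<theta> (m1_root \<theta>) / \<gamma>, I_gain \<theta> (m1_root \<theta>) / \<gamma>)"
proof -
  define q where "q = m1_root \<theta>"
  have q: "n_tilde \<theta> < q" "conj_gap \<theta> q = 0" using m1_root[OF th] unfolding q_def by auto
  have q0: "0 < q" using q n_tilde_pos[OF th] by simp
  define x where "x = I_loss \<theta> q"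
  define y where "y = I_gain \<theta> q"
  have x: "0 < x" "x < y_tilde \<theta>" "dU_loss \<theta> x = q"
    using I_loss_bounds[of \<theta> q] dU_loss_I_loss[of \<theta> q] I_loss_less_y_tilde[OF th q(1)] th q
    unfolding x_def by auto
  have y: "\<gamma> < y" "dU_gain \<theta> y = q" using I_gain_gt dU_gain_I_gain q0 unfolding y_def by auto
  have xy: "x < y" using x y y_tilde_bounds[OF th] by simp
  have "U_loss \<theta> x - q * x = U_gain \<theta> y - q * y"
    using q(2) unfolding conj_gap_def conj_loss_def conj_gain_def x_def y_def by simp
  then have "(U_gain \<theta> y - U_loss \<theta> x) / (y - x) = q" using xy by (simp add: field_simps)
  then show ?thesis unfolding c12_cond_iff q_def[symmetric] x_def[symmetric] y_def[symmetric]
    using x y by simp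
qed

lemma c12_cond_unique:
  assumes th: "0 < \<theta>" and p: "c12_cond \<theta> p"
  shows "p = (I_loss \<theta> (m1_root \<theta>) / \<gamma>, I_gain \<theta> (m1_root \<theta>) / \<gamma>)"
proof -
  define x where "x = fst p * \<gamma>"
  define y where "y = snd p * \<gamma>"
  have "c12_cond \<theta> (x / \<gamma>, y / \<gamma>)" using p gamma_pos unfolding x_def y_def by simp
  then have c: "0 < x" "x < y_tilde \<theta>" "\<gamma> < y" "(U_gain \<theta> y - U_loss \<theta> x) / (y - x) = dU_gain \<theta> y"
      "dU_gain \<theta> y = dU_loss \<theta> x"
    unfolding c12_cond_iff by auto
  define q where "q = dU_loss \<theta> x"
  have qn: "n_tilde \<theta> < q" unfolding q_def using n_tilde_less[OF th] c by simp
  have xe: "I_loss \<theta> q = x" by (rule I_loss_eq[OF th]) (use c in \<open>auto simp: q_def\<close>)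
  have ye: "I_gain \<theta> q = y"
    by (rule I_gain_eq) (use c qn n_tilde_pos[OF th] in \<open>auto simp: q_def\<close>)
  have "U_gain \<theta> y - U_loss \<theta> x = q * (y - x)"
    using c y_tilde_bounds[OF th] unfolding q_def by (simp add: field_simps)
  then have "conj_gap \<theta> q = 0" unfolding conj_gap_def conj_loss_def conj_gain_def xe ye by (simp add: algebra_simps)
  then have "m1_root \<theta> = q" by (rule m1_root_unique[OF th, rotated]) (use qn in simp)
  then show ?thesis using xe ye gamma_pos unfolding x_def y_def by (cases p) auto
qed

lemma c12_eq:
  assumes "0 < \<theta>"
  shows "c12 \<alpha> k \<theta> = (I_loss \<theta> (m1_root \<theta>) / \<gamma>, I_gain \<theta> (m1_root \<theta>) / \<gamma>)"
  unfolding c12_def c12_cond_def[symmetric]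
  by (rule the_equality[of "c12_cond \<theta>", OF c12_cond_root[OF assms] c12_cond_unique[OF assms]])

lemma m1_eq_m1_root:
  assumes th: "0 < \<theta>"
  shows "m1 \<alpha> k \<gamma> \<theta> = m1_root \<theta>"
proof -
  define x where "x = I_loss \<theta> (m1_root \<theta>)"
  define y where "y = I_gain \<theta> (m1_root \<theta>)"
  have "c12_cond \<theta> (x / \<gamma>, y / \<gamma>)" using c12_cond_root[OF th] unfolding x_def y_def .
  then have chord: "(U_gain \<theta> y - U_loss \<theta> x) / (y - x) = m1_root \<theta>"
    unfolding c12_cond_iff using dU_gain_I_gain m1_root_pos[OF th] unfolding y_def by auto
  have "m1 \<alpha> k \<gamma> \<theta> = \<gamma> powr (\<alpha> - 1) * ((U_gain \<theta> y - U_loss \<theta> x) / (y - x) / \<gamma> powr (\<alpha> - 1))"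
    unfolding m1_def Let_def c12_eq[OF th] fst_conv snd_conv chord_rescaled x_def y_def ..
  then show ?thesis using chord gamma_pos by simp
qed

definition conj_gap_zero :: "real \<Rightarrow> real \<Rightarrow> real" where
  "conj_gap_zero \<theta> q = conj_gain \<theta> q + k * \<gamma> powr \<alpha>"

text \<open>For \<theta> \<le> 0 the best loss-side wealth is 0, and k * \<gamma> powr \<alpha> = - U_loss \<theta> 0.\<close>

lemma conj_gap_zero_less: "0 < q1 \<Longrightarrow> q1 < q2 \<Longrightarrow> conj_gap_zero \<theta> q2 < conj_gap_zero \<theta> q1"
  unfolding conj_gap_zero_def using conj_gain_less by simp

lemma tendsto_gap_zero:
  assumes "(\<theta>f \<longlongrightarrow> \<theta>0) F" "(qf \<longlongrightarrow> q0) F" "0 < q0"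
  shows "((\<lambda>x. conj_gap_zero (\<theta>f x) (qf x)) \<longlongrightarrow> conj_gap_zero \<theta>0 q0) F"
  unfolding conj_gap_zero_def by (intro tendsto_add tendsto_const tendsto_conj_gain[OF assms])

lemma conj_gap_zero_cont: "continuous_on {0<..} (conj_gap_zero \<theta>)"
  unfolding continuous_on_def
  using tendsto_gap_zero[OF tendsto_const tendsto_ident_at] by simp

lemma conj_gap_zero_neg_large:
  assumes "\<theta> \<le> 0"
  shows "\<exists>q>0. conj_gap_zero \<theta> q < 0"
proof -
  define q where "q = \<gamma> powr (\<alpha> - 1) + k * \<gamma> powr (\<alpha> - 1) + 1"
  have kg: "0 \<le> k * \<gamma> powr (\<alpha> - 1)" using k_nonneg by simp
  have q1: "(1 + 0) * \<gamma> powr (\<alpha> - 1) \<le> q" unfolding q_def using kg by simp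
  have "0 < \<gamma> powr (\<alpha> - 1)" using gamma_pos by simp
  then have q0: "0 < q" unfolding q_def using kg by linarith
  have "conj_gain \<theta> q \<le> \<gamma> * ((1 + 0) * \<gamma> powr (\<alpha> - 1) - q)"
    by (rule conj_gain_le[OF order.refl assms q1])
  also have "\<dots> = - (k * \<gamma> powr \<alpha> + \<gamma>)" unfolding q_def gamma_powr_split by (simp add: algebra_simps)
  finally have "conj_gap_zero \<theta> q < 0" unfolding conj_gap_zero_def using gamma_pos by simp
  then show ?thesis using q0 by blast
qed

lemma conj_gap_zero_pos_small:
  assumes w: "\<gamma> \<le> w" "- k * \<gamma> powr \<alpha> < U_gain \<theta> w"
  shows "\<exists>q>0. 0 < conj_gap_zero \<theta> q"
proof -
  have w0: "0 < w" using w gamma_pos by simp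
  define q where "q = (U_gain \<theta> w + k * \<gamma> powr \<alpha>) / (2 * w)"
  have pos: "0 < U_gain \<theta> w + k * \<gamma> powr \<alpha>" using w by simp
  have q0: "0 < q" unfolding q_def using pos w0 by simp
  have "q * w = (U_gain \<theta> w + k * \<gamma> powr \<alpha>) / 2" unfolding q_def using w0 by simp
  then have "0 < U_gain \<theta> w - q * w + k * \<gamma> powr \<alpha>" using pos by simp
  also have "\<dots> \<le> conj_gap_zero \<theta> q" unfolding conj_gap_zero_def using conj_gain_ge[OF q0 w(1), of \<theta>] by simp
  finally show ?thesis using q0 by blast
qed

lemma U_gain_exceeds_loss_at_zero_theta_ge_m1:
  assumes k: "0 < k" and th: "-1 \<le> \<theta>"
  shows "\<exists>w\<ge>\<gamma>. - k * \<gamma> powr \<alpha> < U_gain \<theta> w"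
proof -
  define c where "c = k * \<gamma> powr (\<alpha> - 1) / (2 * \<alpha>)"
  have c0: "0 < c" unfolding c_def using k alpha_pos gamma_pos by simp
  define d where "d = c powr (1 / (\<alpha> - 1))"
  have d0: "0 < d" unfolding d_def using c0 by simp
  have dc: "d powr (\<alpha> - 1) = c" unfolding d_def by (rule powr_alpha_inverse[OF c0])
  define w where "w = \<gamma> + d"
  have wd: "w - \<gamma> = d" unfolding w_def by simp
  have "w powr \<alpha> - d powr \<alpha> \<le> (\<alpha> * d powr (\<alpha> - 1)) * (w - d)"
  proof (rule diff_le_of_deriv_le[where f="\<lambda>t. t powr \<alpha>" and f'="\<lambda>t. \<alpha> * t powr (\<alpha> - 1)"])
    show "d \<le> w" unfolding w_def using gamma_pos by simp
    show "continuous_on {d..w} (\<lambda>t. t powr \<alpha>)" using d0 by (intro continuous_intros) auto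
    fix t assume t: "d < t" "t < w"
    show "((\<lambda>t. t powr \<alpha>) has_real_derivative \<alpha> * t powr (\<alpha> - 1)) (at t)"
      using has_real_derivative_powr[of t \<alpha>] t d0 by simp
    have "t powr (\<alpha> - 1) \<le> d powr (\<alpha> - 1)" using powr_mono2'[of "\<alpha> - 1" d t] alpha_lt_1 d0 t by simp
    then show "\<alpha> * t powr (\<alpha> - 1) \<le> \<alpha> * d powr (\<alpha> - 1)" using alpha_pos by (intro mult_left_mono) auto
  qed
  also have "\<dots> = \<alpha> * c * \<gamma>" unfolding dc w_def by simp
  also have "\<dots> = k * \<gamma> powr \<alpha> / 2" unfolding c_def using alpha_pos gamma_powr_split by simp
  finally have m: "w powr \<alpha> - d powr \<alpha> \<le> k * \<gamma> powr \<alpha> / 2" .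
  have "- (w powr \<alpha>) \<le> \<theta> * w powr \<alpha>"
  proof -
    have "(-1) * w powr \<alpha> \<le> \<theta> * w powr \<alpha>" using th by (intro mult_right_mono) auto
    then show ?thesis by simp
  qed
  then have "d powr \<alpha> - w powr \<alpha> \<le> U_gain \<theta> w" unfolding U_gain_def wd by simp
  moreover have "0 < k * \<gamma> powr \<alpha>" using k gamma_pos by simp
  ultimately have "- k * \<gamma> powr \<alpha> < U_gain \<theta> w" using m by simp
  moreover have "\<gamma> \<le> w" unfolding w_def using d0 by simp
  ultimately show ?thesis by blast
qed

text \<open>For \<theta> < -1, dU_gain \<theta> is positive exactly below \<gamma> / (1 - s_crit \<theta>), which is c4 \<gamma>
  in the notation of the paper.\<close>

definition s_crit :: "real \<Rightarrow> real" where
  "s_crit \<theta> = \<bar>\<theta>\<bar> powr (- 1 / (1 - \<alpha>))"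

lemma s_crit_props:
  assumes th: "\<theta> < -1"
  shows "0 < s_crit \<theta>" "s_crit \<theta> < 1" "s_crit \<theta> powr (\<alpha> - 1) = - \<theta>" "1 / s_crit \<theta> = (- \<theta>) powr (1 / (1 - \<alpha>))"
proof -
  have t: "1 < - \<theta>" "\<bar>\<theta>\<bar> = - \<theta>" using th by auto
  show "0 < s_crit \<theta>" unfolding s_crit_def using th by simp
  have "(- \<theta>) powr (- 1 / (1 - \<alpha>)) < 1 powr (- 1 / (1 - \<alpha>))"
    using alpha_lt_1 t by (intro powr_less_mono2_neg) (auto simp: divide_neg_pos)
  then show "s_crit \<theta> < 1" unfolding s_crit_def t by simp
  have e: "- 1 / (1 - \<alpha>) * (\<alpha> - 1) = 1" using alpha_lt_1 by (simp add: field_simps)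
  show "s_crit \<theta> powr (\<alpha> - 1) = - \<theta>" unfolding s_crit_def t powr_powr e using t by simp
  show "1 / s_crit \<theta> = (- \<theta>) powr (1 / (1 - \<alpha>))" unfolding s_crit_def t
    using powr_minus_divide[of "- \<theta>" "1 / (1 - \<alpha>)"] by simp
qed

lemma U_gain_at_s_crit:
  assumes th: "\<theta> < -1"
  shows "U_gain \<theta> (\<gamma> / (1 - s_crit \<theta>)) = - (\<gamma> powr \<alpha> * ((1 - s_crit \<theta>) / s_crit \<theta>) powr (1 - \<alpha>))"
proof -
  define s where "s = s_crit \<theta>"
  have s: "0 < s" "s < 1" "s powr (\<alpha> - 1) = - \<theta>"
    using s_crit_props[OF th] unfolding s_def by auto
  define w where "w = \<gamma> / (1 - s)"
  have wg: "w - \<gamma> = w * s" unfolding w_def using s by (simp add: field_simps)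
  have "U_gain \<theta> w = w powr \<alpha> * (s powr \<alpha> + \<theta>)"
    unfolding U_gain_def wg powr_mult by (simp add: algebra_simps)
  also have "s powr \<alpha> + \<theta> = s * s powr (\<alpha> - 1) - s powr (\<alpha> - 1)"
    using powr_alpha_split[OF s(1)] s(3) by simp
  also have "\<dots> = - (s powr (\<alpha> - 1) * (1 - s))" by (simp add: algebra_simps)
  finally have U: "U_gain \<theta> w = - (w powr \<alpha> * s powr (\<alpha> - 1) * (1 - s))" by simp
  have wpow: "w powr \<alpha> = \<gamma> powr \<alpha> / (1 - s) powr \<alpha>" unfolding w_def powr_divide ..
  have "(1 - s) / (1 - s) powr \<alpha> = (1 - s) powr (1 - \<alpha>)"
    using s by (simp add: powr_diff)
  moreover have "w powr \<alpha> * s powr (\<alpha> - 1) * (1 - s) = \<gamma> powr \<alpha> * (s powr (\<alpha> - 1) * ((1 - s) / (1 - s) powr \<alpha>))"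
    unfolding wpow by simp
  ultimately have "w powr \<alpha> * s powr (\<alpha> - 1) * (1 - s) = \<gamma> powr \<alpha> * (s powr (\<alpha> - 1) * (1 - s) powr (1 - \<alpha>))"
    by simp
  also have "s powr (\<alpha> - 1) * (1 - s) powr (1 - \<alpha>) = ((1 - s) / s) powr (1 - \<alpha>)"
  proof -
    have "(1 / s) powr (1 - \<alpha>) = 1 / s powr (1 - \<alpha>)" by (simp add: powr_divide)
    also have "\<dots> = s powr (- (1 - \<alpha>))" by (rule powr_minus_divide[symmetric])
    finally have "s powr (\<alpha> - 1) = (1 / s) powr (1 - \<alpha>)" by simp
    then show ?thesis by (simp add: powr_divide field_simps)
  qed
  finally show ?thesis using U unfolding w_def s_def by simp
qed

lemma U_gain_exceeds_loss_at_zero_theta_lt_m1: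
  assumes k: "0 < k" and th: "\<theta> < -1" and tl: "theta_low \<alpha> k < \<theta>"
  shows "\<exists>w\<ge>\<gamma>. - k * \<gamma> powr \<alpha> < U_gain \<theta> w"
proof -
  define s where "s = s_crit \<theta>"
  have s: "0 < s" "s < 1" "1 / s = (- \<theta>) powr (1 / (1 - \<alpha>))"
    using s_crit_props[OF th] unfolding s_def by auto
  define w where "w = \<gamma> / (1 - s)"
  have w: "\<gamma> < w" unfolding w_def using s gamma_pos by (simp add: less_divide_eq)
  have U': "U_gain \<theta> w = - (\<gamma> powr \<alpha> * ((1 - s) / s) powr (1 - \<alpha>))"
    using U_gain_at_s_crit[OF th] unfolding w_def s_def .
  define K where "K = k powr (1 / (1 - \<alpha>))"
  have K0: "0 < K" unfolding K_def using k by simp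
  have tl': "- \<theta> < (1 + K) powr (1 - \<alpha>)"
    using tl unfolding theta_low_def K_def by simp
  have "(- \<theta>) powr (1 / (1 - \<alpha>)) < ((1 + K) powr (1 - \<alpha>)) powr (1 / (1 - \<alpha>))"
    using tl' th alpha_lt_1 by (intro powr_less_mono2) auto
  also have "\<dots> = 1 + K" using alpha_lt_1 K0 by (simp add: powr_powr)
  finally have "1 / s < 1 + K" using s(3) by simp
  then have "(1 - s) / s < K" using s(1,2) by (simp add: field_simps)
  then have "((1 - s) / s) powr (1 - \<alpha>) < K powr (1 - \<alpha>)"
    using s alpha_lt_1 by (intro powr_less_mono2) auto
  also have "K powr (1 - \<alpha>) = k" unfolding K_def using alpha_lt_1 k by (simp add: powr_powr)
  finally have "\<gamma> powr \<alpha> * ((1 - s) / s) powr (1 - \<alpha>) < \<gamma> powr \<alpha> * k"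
    using gamma_pos by (intro mult_strict_left_mono) auto
  then have "- k * \<gamma> powr \<alpha> < U_gain \<theta> w" unfolding U' by (simp add: algebra_simps)
  then show ?thesis using w by (intro exI[of _ w]) auto
qed

definition nonpos_dom :: "real \<Rightarrow> bool" where
  "nonpos_dom \<theta> \<longleftrightarrow> theta_low \<alpha> k < \<theta> \<and> \<theta> \<le> 0"

lemma ex1_gap_zero_root:
  assumes k: "0 < k" and th: "nonpos_dom \<theta>"
  shows "\<exists>!q. q \<in> {0<..} \<and> conj_gap_zero \<theta> q = 0"
proof -
  have th0: "\<theta> \<le> 0" using th unfolding nonpos_dom_def by simp
  have "\<exists>w\<ge>\<gamma>. - k * \<gamma> powr \<alpha> < U_gain \<theta> w"
  proof (cases "-1 \<le> \<theta>")
    case False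
    then show ?thesis using U_gain_exceeds_loss_at_zero_theta_lt_m1[OF k] th unfolding nonpos_dom_def by simp
  qed (rule U_gain_exceeds_loss_at_zero_theta_ge_m1[OF k])
  then obtain w where w: "\<gamma> \<le> w" "- k * \<gamma> powr \<alpha> < U_gain \<theta> w" by blast
  obtain qa where qa: "0 < qa" "0 < conj_gap_zero \<theta> qa" using conj_gap_zero_pos_small[OF w] by blast
  obtain qb where qb: "0 < qb" "conj_gap_zero \<theta> qb < 0" using conj_gap_zero_neg_large[OF th0] by blast
  have anti: "strict_antimono_on {0<..} (conj_gap_zero \<theta>)"
    by (rule monotone_onI) (auto intro: conj_gap_zero_less)
  have "qa \<le> qb" using monotone_onD[OF anti, of qb qa] qa qb by (cases qa qb rule: linorder_cases) auto
  then show ?thesis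
    by (rule ex1_root_strict_antimono[OF _ _ continuous_on_subset[OF conj_gap_zero_cont] _ _ anti])
       (use qa qb in auto)
qed

definition m2_root :: "real \<Rightarrow> real" where
  "m2_root \<theta> = (THE q. q \<in> {0<..} \<and> conj_gap_zero \<theta> q = 0)"

lemma m2_root:
  assumes "0 < k" "nonpos_dom \<theta>"
  shows "0 < m2_root \<theta>" "conj_gap_zero \<theta> (m2_root \<theta>) = 0"
  using theI'[OF ex1_gap_zero_root[OF assms]] unfolding m2_root_def by auto

lemma m2_root_unique:
  assumes "0 < k" "nonpos_dom \<theta>" "0 < q" "conj_gap_zero \<theta> q = 0"
  shows "m2_root \<theta> = q"
  using ex1_gap_zero_root[OF assms(1,2)] m2_root[OF assms(1,2)] assms(3,4) by auto

lemma tendsto_m2_root: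
  assumes k: "0 < k" and th: "(\<theta>f \<longlongrightarrow> \<theta>0) F" and t0: "nonpos_dom \<theta>0"
    and ev: "\<forall>\<^sub>F x in F. nonpos_dom (\<theta>f x)"
  shows "((\<lambda>x. m2_root (\<theta>f x)) \<longlongrightarrow> m2_root \<theta>0) F"
proof -
  have s0: "0 < m2_root \<theta>0" "conj_gap_zero \<theta>0 (m2_root \<theta>0) = 0" using m2_root[OF k t0] by auto
  show ?thesis
  proof (rule tendsto_root_antimono[OF s0(1) less_add_one tendsto_const])
    fix c :: real assume c: "0 < c"
    show "((\<lambda>x. conj_gap_zero (\<theta>f x) c) \<longlongrightarrow> conj_gap_zero \<theta>0 c) F"
      by (rule tendsto_gap_zero[OF th tendsto_const c])
    show "c < m2_root \<theta>0 \<Longrightarrow> 0 < conj_gap_zero \<theta>0 c" using conj_gap_zero_less[OF c, of "m2_root \<theta>0" \<theta>0] s0 by auto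
    show "\<forall>\<^sub>F x in F. (0 < conj_gap_zero (\<theta>f x) c \<longrightarrow> c < m2_root (\<theta>f x)) \<and>
        (conj_gap_zero (\<theta>f x) c < 0 \<longrightarrow> m2_root (\<theta>f x) < c)"
      using ev
    proof eventually_elim
      case (elim x)
      have r: "0 < m2_root (\<theta>f x)" "conj_gap_zero (\<theta>f x) (m2_root (\<theta>f x)) = 0"
        using m2_root[OF k elim] by auto
      have "conj_gap_zero (\<theta>f x) c \<le> 0" if "m2_root (\<theta>f x) \<le> c"
        using conj_gap_zero_less[of "m2_root (\<theta>f x)" c "\<theta>f x"] that r by (cases "m2_root (\<theta>f x) = c") auto
      moreover have "0 \<le> conj_gap_zero (\<theta>f x) c" if "c \<le> m2_root (\<theta>f x)"
        using conj_gap_zero_less[of c "m2_root (\<theta>f x)" "\<theta>f x"] that r c by (cases "m2_root (\<theta>f x) = c") auto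
      ultimately show ?case by linarith
    qed
  next
    fix c assume "m2_root \<theta>0 < c"
    then show "conj_gap_zero \<theta>0 c < 0" using conj_gap_zero_less[OF s0(1), of c \<theta>0] s0 by simp
  qed
qed

lemma c3_ratio_rescaled:
  "((y / \<gamma> - 1) powr \<alpha> + \<theta> * (y / \<gamma>) powr \<alpha> + k) / (y / \<gamma>)
     = (U_gain \<theta> y + k * \<gamma> powr \<alpha>) / y / \<gamma> powr (\<alpha> - 1)"
proof -
  have e1: "y / \<gamma> - 1 = (y - \<gamma>) / \<gamma>" using gamma_pos by (simp add: field_simps)
  have gp: "0 < \<gamma> powr \<alpha>" using gamma_pos by simp
  have gp1: "0 < \<gamma> powr (\<alpha> - 1)" using gamma_pos by simp
  have num: "(y / \<gamma> - 1) powr \<alpha> + \<theta> * (y / \<gamma>) powr \<alpha> + k = (U_gain \<theta> y + k * \<gamma> powr \<alpha>) / \<gamma> powr \<alpha>"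
    unfolding e1 U_gain_def powr_divide using gp by (simp add: field_simps)
  have "(U_gain \<theta> y + k * \<gamma> powr \<alpha>) / (\<gamma> * \<gamma> powr (\<alpha> - 1)) / (y / \<gamma>)
      = (U_gain \<theta> y + k * \<gamma> powr \<alpha>) / y / \<gamma> powr (\<alpha> - 1)"
  proof (cases "y = 0")
    case True then show ?thesis by simp
  next
    case False then show ?thesis using gamma_pos gp1 by (simp add: field_simps)
  qed
  then show ?thesis unfolding num gamma_powr_split .
qed

lemma dU_gain_pos_iff:
  assumes th: "\<theta> \<le> 0" and y: "\<gamma> < y"
  shows "0 < dU_gain \<theta> y \<longleftrightarrow> (\<theta> < -1 \<longrightarrow> y < \<gamma> / (1 - s_crit \<theta>))"
proof -
  have y0: "0 < y" using y gamma_pos by simp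
  define r where "r = (y - \<gamma>) / y"
  have r: "0 < r" "r < 1" unfolding r_def using y y0 gamma_pos by (auto simp: field_simps)
  have hf: "dU_gain \<theta> y = \<alpha> * y powr (\<alpha> - 1) * (r powr (\<alpha> - 1) + \<theta>)"
    using dU_gain_factor[OF y] unfolding r_def .
  have ap: "0 < \<alpha> * y powr (\<alpha> - 1)" using alpha_pos y0 by simp
  have pos: "0 < dU_gain \<theta> y \<longleftrightarrow> 0 < r powr (\<alpha> - 1) + \<theta>"
    unfolding hf using ap zero_less_mult_pos[of "\<alpha> * y powr (\<alpha> - 1)"] mult_pos_pos[OF ap] by blast
  show ?thesis
  proof (cases "\<theta> < -1")
    case False
    have "1 powr (\<alpha> - 1) < r powr (\<alpha> - 1)" using r alpha_lt_1 by (intro powr_less_mono2_neg) auto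
    then have "0 < r powr (\<alpha> - 1) + \<theta>" using False by simp
    then show ?thesis using pos False by simp
  next
    case True
    define s where "s = s_crit \<theta>"
    have s: "0 < s" "s < 1" "s powr (\<alpha> - 1) = - \<theta>" using s_crit_props[OF True] unfolding s_def by auto
    have "0 < r powr (\<alpha> - 1) + \<theta> \<longleftrightarrow> r < s"
    proof
      assume a: "0 < r powr (\<alpha> - 1) + \<theta>"
      show "r < s"
      proof (rule ccontr)
        assume "\<not> r < s"
        then have "r powr (\<alpha> - 1) \<le> s powr (\<alpha> - 1)" using powr_mono2'[of "\<alpha> - 1" s r] alpha_lt_1 s by simp
        then show False using a s by simp
      qed
    next
      assume "r < s"
      then have "s powr (\<alpha> - 1) < r powr (\<alpha> - 1)" using r alpha_lt_1 by (intro powr_less_mono2_neg) auto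
      then show "0 < r powr (\<alpha> - 1) + \<theta>" using s by simp
    qed
    moreover have "r < s \<longleftrightarrow> y < \<gamma> / (1 - s)"
      unfolding r_def using s y0 gamma_pos by (simp add: field_simps)
    ultimately show ?thesis using pos True unfolding s_def by simp
  qed
qed

definition c3_cond :: "real \<Rightarrow> real \<Rightarrow> bool" where
  "c3_cond \<theta> c \<longleftrightarrow> 1 < c \<and>
      (\<theta> < -1 \<longrightarrow> c < 1 / (1 - \<bar>\<theta>\<bar> powr (- 1 / (1 - \<alpha>)))) \<and>
      ((c - 1) powr \<alpha> + \<theta> * c powr \<alpha> + k) / c
        = \<alpha> * ((c - 1) powr (\<alpha> - 1) + \<theta> * c powr (\<alpha> - 1))"

lemma c3_cond_iff:
  assumes th: "\<theta> \<le> 0"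
  shows "c3_cond \<theta> (y / \<gamma>) \<longleftrightarrow> \<gamma> < y \<and> 0 < dU_gain \<theta> y \<and> (U_gain \<theta> y + k * \<gamma> powr \<alpha>) / y = dU_gain \<theta> y"
proof -
  have gp: "0 < \<gamma> powr (\<alpha> - 1)" using gamma_pos by simp
  have c: "1 < y / \<gamma> \<longleftrightarrow> \<gamma> < y" using gamma_pos by (simp add: less_divide_eq)
  have b: "\<gamma> < y \<Longrightarrow> (\<theta> < -1 \<longrightarrow> y / \<gamma> < 1 / (1 - \<bar>\<theta>\<bar> powr (- 1 / (1 - \<alpha>)))) \<longleftrightarrow> 0 < dU_gain \<theta> y"
  proof -
    assume y: "\<gamma> < y"
    have "\<theta> < -1 \<Longrightarrow> y / \<gamma> < 1 / (1 - s_crit \<theta>) \<longleftrightarrow> y < \<gamma> / (1 - s_crit \<theta>)"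
      using s_crit_props gamma_pos by (simp add: field_simps)
    then show ?thesis using dU_gain_pos_iff[OF th y] unfolding s_crit_def by auto
  qed
  have d: "(U_gain \<theta> y + k * \<gamma> powr \<alpha>) / y / \<gamma> powr (\<alpha> - 1) = dU_gain \<theta> y / \<gamma> powr (\<alpha> - 1)
     \<longleftrightarrow> (U_gain \<theta> y + k * \<gamma> powr \<alpha>) / y = dU_gain \<theta> y" using gp by (subst divide_cancel_right) simp
  show ?thesis unfolding c3_cond_def c3_ratio_rescaled dU_gain_rescaled d using b c by blast
qed

lemma c3_cond_root:
  assumes k: "0 < k" and th: "nonpos_dom \<theta>"
  shows "c3_cond \<theta> (I_gain \<theta> (m2_root \<theta>) / \<gamma>)"
proof -
  have th0: "\<theta> \<le> 0" using th unfolding nonpos_dom_def by simp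
  define q where "q = m2_root \<theta>"
  have q: "0 < q" "conj_gap_zero \<theta> q = 0" using m2_root[OF k th] unfolding q_def by auto
  define y where "y = I_gain \<theta> q"
  have y: "\<gamma> < y" "dU_gain \<theta> y = q" using I_gain_gt dU_gain_I_gain q(1) unfolding y_def by auto
  have "U_gain \<theta> y - q * y + k * \<gamma> powr \<alpha> = 0" using q(2) unfolding conj_gap_zero_def conj_gain_def y_def by simp
  then have "(U_gain \<theta> y + k * \<gamma> powr \<alpha>) / y = q" using y gamma_pos by (simp add: field_simps)
  then show ?thesis unfolding c3_cond_iff[OF th0] q_def[symmetric] y_def[symmetric] using y q by simp
qed

lemma c3_cond_unique:
  assumes k: "0 < k" and th: "nonpos_dom \<theta>" and c: "c3_cond \<theta> c"
  shows "c = I_gain \<theta> (m2_root \<theta>) / \<gamma>"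
proof -
  have th0: "\<theta> \<le> 0" using th unfolding nonpos_dom_def by simp
  define y where "y = c * \<gamma>"
  have c': "\<gamma> < y" "0 < dU_gain \<theta> y" "(U_gain \<theta> y + k * \<gamma> powr \<alpha>) / y = dU_gain \<theta> y"
    using c c3_cond_iff[OF th0, of y] gamma_pos unfolding y_def by auto
  define q where "q = dU_gain \<theta> y"
  have q0: "0 < q" using c' unfolding q_def by simp
  have ye: "I_gain \<theta> q = y" by (rule I_gain_eq[OF q0]) (use c' in \<open>auto simp: q_def\<close>)
  have "U_gain \<theta> y + k * \<gamma> powr \<alpha> = q * y" using c' gamma_pos unfolding q_def by (simp add: field_simps)
  then have "conj_gap_zero \<theta> q = 0" unfolding conj_gap_zero_def conj_gain_def ye by simp
  then have "m2_root \<theta> = q" by (rule m2_root_unique[OF k th q0])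
  then show ?thesis using ye gamma_pos unfolding y_def by simp
qed

lemma c3_eq:
  assumes "0 < k" "nonpos_dom \<theta>"
  shows "c3 \<alpha> k \<theta> = I_gain \<theta> (m2_root \<theta>) / \<gamma>"
  unfolding c3_def c3_cond_def[symmetric]
  by (rule the_equality[of "c3_cond \<theta>", OF c3_cond_root[OF assms] c3_cond_unique[OF assms]])

lemma m2_eq_m2_root:
  assumes k: "0 < k" and th: "nonpos_dom \<theta>"
  shows "m2 \<alpha> k \<gamma> \<theta> = m2_root \<theta>"
proof -
  have th0: "\<theta> \<le> 0" using th unfolding nonpos_dom_def by simp
  define y where "y = I_gain \<theta> (m2_root \<theta>)"
  have "c3_cond \<theta> (y / \<gamma>)" using c3_cond_root[OF k th] unfolding y_def .
  then have ratio: "(U_gain \<theta> y + k * \<gamma> powr \<alpha>) / y = m2_root \<theta>"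
    unfolding c3_cond_iff[OF th0] using dU_gain_I_gain m2_root[OF k th] unfolding y_def by auto
  have "m2 \<alpha> k \<gamma> \<theta> = \<gamma> powr (\<alpha> - 1) * ((U_gain \<theta> y + k * \<gamma> powr \<alpha>) / y / \<gamma> powr (\<alpha> - 1))"
    unfolding m2_def Let_def c3_eq[OF k th] c3_ratio_rescaled y_def ..
  then show ?thesis using ratio gamma_pos by simp
qed

section \<open>Optimal terminal wealth\<close>

definition y_opt :: "real \<Rightarrow> real \<Rightarrow> real" where
  "y_opt \<theta> q = y_lam \<alpha> k \<gamma> \<theta> 1 q"

definition theta_dom :: "real \<Rightarrow> bool" where
  "theta_dom \<theta> \<longleftrightarrow> 0 < \<theta> \<or> (0 < k \<and> nonpos_dom \<theta>)"

definition threshold :: "real \<Rightarrow> real" where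
  "threshold \<theta> = (if 0 < \<theta> then m1_root \<theta> else m2_root \<theta>)"

lemma y_lam_eq_y_opt: "y_lam \<alpha> k \<gamma> \<theta> lam z = y_opt \<theta> (lam * z)"
  unfolding y_opt_def y_lam_def by simp

lemma y_opt_pos_theta: "0 < \<theta> \<Longrightarrow> y_opt \<theta> q = (if m1_root \<theta> < q then I_loss \<theta> q else I_gain \<theta> q)"
  unfolding y_opt_def y_lam_def using m1_eq_m1_root by simp

lemma y_opt_nonpos_theta:
  "0 < k \<Longrightarrow> nonpos_dom \<theta> \<Longrightarrow> y_opt \<theta> q = (if q \<le> m2_root \<theta> then I_gain \<theta> q else 0)"
  unfolding y_opt_def y_lam_def using m2_eq_m2_root unfolding nonpos_dom_def by auto

lemma theta_dom_cases:
  assumes "theta_dom \<theta>"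
  obtains "0 < \<theta>" | "0 < k" "nonpos_dom \<theta>" "\<theta> \<le> 0"
  using assms unfolding theta_dom_def nonpos_dom_def by auto

lemma I_loss_le_gamma: "0 < \<theta> \<Longrightarrow> m1_root \<theta> < q \<Longrightarrow> I_loss \<theta> q \<le> \<gamma>"
  using I_loss_bounds[of \<theta> q] m1_root(1)[of \<theta>] y_tilde_bounds[of \<theta>] by force

lemma y_opt_nonneg:
  assumes "theta_dom \<theta>" "0 < q"
  shows "0 \<le> y_opt \<theta> q"
  using assms(1)
proof (cases rule: theta_dom_cases)
  case 1
  then show ?thesis
    using y_opt_pos_theta[OF 1] I_loss_bounds[of \<theta> q] m1_root(1)[OF 1] I_gain_gt[OF assms(2), of \<theta>] gamma_pos
    by (cases "m1_root \<theta> < q") auto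
next
  case 2
  then show ?thesis using y_opt_nonpos_theta[OF 2(1,2)] I_gain_gt[OF assms(2), of \<theta>] gamma_pos by simp
qed

lemma y_opt_le:
  assumes "theta_dom \<theta>" "0 < q" "\<theta> \<le> T" "0 \<le> T"
  shows "y_opt \<theta> q \<le> \<gamma> + (q / (\<alpha> * (1 + T))) powr (1 / (\<alpha> - 1))"
proof -
  have I: "I_gain \<theta> q \<le> \<gamma> + (q / (\<alpha> * (1 + T))) powr (1 / (\<alpha> - 1))"
    by (rule I_gain_le[OF assms(2,3,4)])
  have p: "0 \<le> (q / (\<alpha> * (1 + T))) powr (1 / (\<alpha> - 1))" by simp
  show ?thesis using assms(1)
  proof (cases rule: theta_dom_cases)
    case 1
    have "I_loss \<theta> q \<le> \<gamma> + (q / (\<alpha> * (1 + T))) powr (1 / (\<alpha> - 1))" if "m1_root \<theta> < q"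
      using I_loss_le_gamma[OF 1 that] p by linarith
    then show ?thesis using y_opt_pos_theta[OF 1] I by simp
  next
    case 2
    then show ?thesis using y_opt_nonpos_theta[OF 2(1,2)] I p gamma_pos by simp
  qed
qed

lemma y_opt_less:
  assumes "theta_dom \<theta>" "0 < q1" "q1 < q2" "\<theta> \<le> 0 \<Longrightarrow> q2 \<le> m2_root \<theta>"
  shows "y_opt \<theta> q2 < y_opt \<theta> q1"
proof -
  have I: "I_gain \<theta> q2 < I_gain \<theta> q1" by (rule I_gain_less[OF assms(2,3)])
  show ?thesis using assms(1)
  proof (cases rule: theta_dom_cases)
    case 1
    consider "m1_root \<theta> < q1" | "q1 \<le> m1_root \<theta>" "m1_root \<theta> < q2" | "q2 \<le> m1_root \<theta>" by linarith
    then show ?thesis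
    proof cases
      case 1
      then have "I_loss \<theta> q2 < I_loss \<theta> q1"
        using m1_root(1)[of \<theta>] \<open>0 < \<theta>\<close> assms(3) by (intro I_loss_less) auto
      then show ?thesis using y_opt_pos_theta[OF \<open>0 < \<theta>\<close>] 1 assms(3) by simp
    next
      case 2
      then show ?thesis
        using y_opt_pos_theta[OF \<open>0 < \<theta>\<close>] I_loss_le_gamma[OF \<open>0 < \<theta>\<close>, of q2] I_gain_gt[OF assms(2), of \<theta>]
        by simp
    next
      case 3
      then show ?thesis using y_opt_pos_theta[OF \<open>0 < \<theta>\<close>] assms(3) I by simp
    qed
  next
    case 2
    then show ?thesis using y_opt_nonpos_theta[OF 2(1,2)] I assms by simp
  qed
qed

lemma y_opt_antimono:
  assumes "theta_dom \<theta>" "0 < q1" "q1 \<le> q2"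
  shows "y_opt \<theta> q2 \<le> y_opt \<theta> q1"
proof (cases "q1 = q2 \<or> (\<theta> \<le> 0 \<and> m2_root \<theta> < q2)")
  case True
  then show ?thesis
  proof
    assume "\<theta> \<le> 0 \<and> m2_root \<theta> < q2"
    then show ?thesis
      using assms y_opt_nonpos_theta y_opt_nonneg unfolding theta_dom_def by fastforce
  qed simp
next
  case False
  then have "q1 < q2" "\<theta> \<le> 0 \<Longrightarrow> q2 \<le> m2_root \<theta>" using assms(3) by auto
  then show ?thesis using y_opt_less[OF assms(1,2)] by (simp add: less_imp_le)
qed

lemma tendsto_y_opt_pos_theta:
  assumes th: "(\<theta>f \<longlongrightarrow> \<theta>0) F" and t0: "0 < \<theta>0" and qq: "(qf \<longlongrightarrow> q0) F" and q0: "0 < q0"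
    and qm: "q0 \<noteq> m1_root \<theta>0"
  shows "((\<lambda>x. y_opt (\<theta>f x) (qf x)) \<longlongrightarrow> y_opt \<theta>0 q0) F"
proof -
  have evt: "\<forall>\<^sub>F x in F. 0 < \<theta>f x" using order_tendstoD(1)[OF th t0] .
  have QS: "((\<lambda>x. qf x - m1_root (\<theta>f x)) \<longlongrightarrow> q0 - m1_root \<theta>0) F"
    by (intro tendsto_diff qq tendsto_m1_root[OF th t0])
  show ?thesis
  proof (cases "m1_root \<theta>0 < q0")
    case True
    have ev: "\<forall>\<^sub>F x in F. m1_root (\<theta>f x) < qf x"
      using order_tendstoD(1)[OF QS, of 0] True by simp
    have ev2: "\<forall>\<^sub>F x in F. 0 < \<theta>f x \<and> n_tilde (\<theta>f x) \<le> qf x"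
      using ev evt by eventually_elim (use m1_root(1) in force)
    have n0: "n_tilde \<theta>0 \<le> q0" using m1_root(1)[OF t0] True by simp
    have "((\<lambda>x. I_loss (\<theta>f x) (qf x)) \<longlongrightarrow> I_loss \<theta>0 q0) F" by (rule tendsto_I_loss[OF th qq t0 n0 ev2])
    moreover have "\<forall>\<^sub>F x in F. I_loss (\<theta>f x) (qf x) = y_opt (\<theta>f x) (qf x)"
      using ev evt by eventually_elim (simp add: y_opt_pos_theta)
    ultimately show ?thesis using y_opt_pos_theta[OF t0] True by (simp add: Lim_transform_eventually)
  next
    case False
    then have lt: "q0 < m1_root \<theta>0" using qm by simp
    have ev: "\<forall>\<^sub>F x in F. qf x < m1_root (\<theta>f x)"
      using order_tendstoD(2)[OF QS, of 0] lt by simp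
    have "((\<lambda>x. I_gain (\<theta>f x) (qf x)) \<longlongrightarrow> I_gain \<theta>0 q0) F" by (rule tendsto_I_gain[OF th qq q0])
    moreover have "\<forall>\<^sub>F x in F. I_gain (\<theta>f x) (qf x) = y_opt (\<theta>f x) (qf x)"
      using ev evt by eventually_elim (simp add: y_opt_pos_theta)
    ultimately show ?thesis using y_opt_pos_theta[OF t0] lt by (simp add: Lim_transform_eventually)
  qed
qed

lemma tendsto_y_opt_nonpos_theta:
  assumes k: "0 < k" and th: "(\<theta>f \<longlongrightarrow> \<theta>0) F" and t0: "nonpos_dom \<theta>0"
    and evd: "\<forall>\<^sub>F x in F. nonpos_dom (\<theta>f x)"
    and qq: "(qf \<longlongrightarrow> q0) F" and q0: "0 < q0" and qm: "q0 \<noteq> m2_root \<theta>0"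
  shows "((\<lambda>x. y_opt (\<theta>f x) (qf x)) \<longlongrightarrow> y_opt \<theta>0 q0) F"
proof -
  have QS: "((\<lambda>x. qf x - m2_root (\<theta>f x)) \<longlongrightarrow> q0 - m2_root \<theta>0) F"
    by (intro tendsto_diff qq tendsto_m2_root[OF k th t0 evd])
  show ?thesis
  proof (cases "m2_root \<theta>0 < q0")
    case True
    have ev: "\<forall>\<^sub>F x in F. m2_root (\<theta>f x) < qf x"
      using order_tendstoD(1)[OF QS, of 0] True by simp
    have "\<forall>\<^sub>F x in F. 0 = y_opt (\<theta>f x) (qf x)"
      using ev evd by eventually_elim (simp add: y_opt_nonpos_theta[OF k])
    then have "((\<lambda>x. y_opt (\<theta>f x) (qf x)) \<longlongrightarrow> 0) F"
      by (rule Lim_transform_eventually[OF tendsto_const])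
    then show ?thesis using y_opt_nonpos_theta[OF k t0] True by simp
  next
    case False
    then have lt: "q0 < m2_root \<theta>0" using qm by simp
    have ev: "\<forall>\<^sub>F x in F. qf x < m2_root (\<theta>f x)"
      using order_tendstoD(2)[OF QS, of 0] lt by simp
    have "((\<lambda>x. I_gain (\<theta>f x) (qf x)) \<longlongrightarrow> I_gain \<theta>0 q0) F" by (rule tendsto_I_gain[OF th qq q0])
    moreover have "\<forall>\<^sub>F x in F. I_gain (\<theta>f x) (qf x) = y_opt (\<theta>f x) (qf x)"
      using ev evd by eventually_elim (simp add: y_opt_nonpos_theta[OF k])
    ultimately show ?thesis using y_opt_nonpos_theta[OF k t0] lt by (simp add: Lim_transform_eventually)
  qed
qed

lemma y_opt_le_large:
  assumes "theta_dom \<theta>" "0 < \<epsilon>"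
  shows "\<exists>Q>0. \<forall>q\<ge>Q. y_opt \<theta> q \<le> \<epsilon>"
  using assms(1)
proof (cases rule: theta_dom_cases)
  case 1
  have qn: "n_tilde \<theta> \<le> m1_root \<theta> + 1" using m1_root(1)[OF 1] by simp
  define y1 where "y1 = I_loss \<theta> (m1_root \<theta> + 1)"
  have y1: "0 < y1" "y1 \<le> y_tilde \<theta>" "dU_loss \<theta> y1 = m1_root \<theta> + 1" using I_loss_bounds[OF 1 qn] dU_loss_I_loss[OF 1 qn] unfolding y1_def by auto
  define y where "y = min (\<epsilon> / 2) (y1 / 2)"
  have y: "0 < y" "y < y1" "y \<le> \<epsilon>" unfolding y_def using y1 assms by auto
  define Q where "Q = dU_loss \<theta> y"
  have "dU_loss \<theta> y1 < dU_loss \<theta> y" by (rule dU_loss_less[OF 1 y(1) y(2) y1(2)])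
  then have Qq: "m1_root \<theta> < Q" unfolding Q_def using y1 by simp
  have Q0: "0 < Q" using Qq m1_root_pos[OF 1] by simp
  have PQ: "y_opt \<theta> Q = y"
    using y_opt_pos_theta[OF 1] Qq I_loss_eq[OF 1 y(1) _ refl[of "dU_loss \<theta> y"]] y y1 unfolding Q_def by simp
  show ?thesis
  proof (intro exI[of _ Q] conjI allI impI Q0)
    fix q assume "Q \<le> q"
    then have "y_opt \<theta> q \<le> y_opt \<theta> Q" by (intro y_opt_antimono[OF assms(1) Q0])
    then show "y_opt \<theta> q \<le> \<epsilon>" using PQ y by simp
  qed
next
  case 2
  have q0: "0 < m2_root \<theta> + 1" using m2_root[OF 2(1,2)] by simp
  show ?thesis
  proof (intro exI[of _ "m2_root \<theta> + 1"] conjI allI impI q0)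
    fix q assume "m2_root \<theta> + 1 \<le> q"
    then show "y_opt \<theta> q \<le> \<epsilon>" using y_opt_nonpos_theta[OF 2(1,2)] assms by simp
  qed
qed

lemma tendsto_y_opt_at_top:
  assumes "theta_dom \<theta>"
  shows "(y_opt \<theta> \<longlongrightarrow> 0) at_top"
proof (rule order_tendstoI)
  show "\<forall>\<^sub>F q in at_top. a < y_opt \<theta> q" if "a < 0" for a
    using eventually_gt_at_top[of 0] by eventually_elim (use y_opt_nonneg[OF assms] that in force)
  show "\<forall>\<^sub>F q in at_top. y_opt \<theta> q < b" if "0 < b" for b
  proof -
    have "0 < b / 2" using that by simp
    then obtain Q where Q: "\<forall>q\<ge>Q. y_opt \<theta> q \<le> b / 2" using y_opt_le_large[OF assms] by blast
    show ?thesis using eventually_ge_at_top[of Q] by eventually_elim (use Q that in force)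
  qed
qed

lemma y_opt_ge_small:
  assumes "theta_dom \<theta>" "0 < \<theta> \<or> L \<le> \<gamma>"
  shows "\<exists>c>0. \<forall>q. 0 < q \<and> q \<le> c \<longrightarrow> L \<le> y_opt \<theta> q"
  using assms(1)
proof (cases rule: theta_dom_cases)
  case 1
  define L' where "L' = max L (\<gamma> + 1)"
  have L': "\<gamma> < L'" "L \<le> L'" unfolding L'_def by auto
  have hp: "0 < dU_gain \<theta> L'" unfolding dU_gain_def using 1 L' alpha_pos gamma_pos by (intro mult_pos_pos add_pos_pos) auto
  define c where "c = min (m1_root \<theta>) (dU_gain \<theta> L')"
  have c0: "0 < c" unfolding c_def using m1_root_pos[OF 1] hp by simp
  show ?thesis
  proof (intro exI[of _ c] conjI allI impI c0)
    fix q assume q: "0 < q \<and> q \<le> c"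
    have "y_opt \<theta> q = I_gain \<theta> q" using y_opt_pos_theta[OF 1] q unfolding c_def by simp
    moreover have "I_gain \<theta> (dU_gain \<theta> L') = L'" by (rule I_gain_eq[OF hp L'(1) refl])
    moreover have "I_gain \<theta> (dU_gain \<theta> L') \<le> I_gain \<theta> q"
      using I_gain_less[of q "dU_gain \<theta> L'" \<theta>] q unfolding c_def by (cases "q = dU_gain \<theta> L'") auto
    ultimately show "L \<le> y_opt \<theta> q" using L' by simp
  qed
next
  case 2
  have L: "L \<le> \<gamma>" using assms(2) 2 by simp
  show ?thesis
  proof (intro exI[of _ "m2_root \<theta>"] conjI allI impI)
    show "0 < m2_root \<theta>" using m2_root[OF 2(1,2)] by simp
    fix q assume q: "0 < q \<and> q \<le> m2_root \<theta>"
    then show "L \<le> y_opt \<theta> q" using y_opt_nonpos_theta[OF 2(1,2)] I_gain_gt[of q \<theta>] L by simp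
  qed
qed

lemma tendsto_y_opt:
  assumes th: "(\<theta>f \<longlongrightarrow> \<theta>0) F" and dom: "theta_dom \<theta>0"
    and ev: "\<forall>\<^sub>F x in F. theta_dom (\<theta>f x) \<and> (0 < \<theta>f x \<longleftrightarrow> 0 < \<theta>0)"
    and qq: "(qf \<longlongrightarrow> q0) F" and q0: "0 < q0" "q0 \<noteq> threshold \<theta>0"
  shows "((\<lambda>x. y_opt (\<theta>f x) (qf x)) \<longlongrightarrow> y_opt \<theta>0 q0) F"
  using dom
proof (cases rule: theta_dom_cases)
  case 1
  then show ?thesis using tendsto_y_opt_pos_theta[OF th 1 qq q0(1)] q0 unfolding threshold_def by simp
next
  case 2
  have "\<forall>\<^sub>F x in F. nonpos_dom (\<theta>f x)"
    using ev by eventually_elim (use 2 in \<open>auto simp: theta_dom_def\<close>)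
  then show ?thesis
    using tendsto_y_opt_nonpos_theta[OF 2(1) th 2(2) _ qq q0(1)] q0 2 unfolding threshold_def by simp
qed

end

section \<open>The budget constraint\<close>

lemma normal_density_mult_exp:
  assumes t: "0 < \<tau>"
  shows "normal_density 0 (sqrt \<tau>) x * exp (a * x) = exp (a\<^sup>2 * \<tau> / 2) * normal_density (a * \<tau>) (sqrt \<tau>) x"
proof -
  have "- (x\<^sup>2 / (2 * \<tau>)) + a * x = - ((x - a * \<tau>)\<^sup>2 / (2 * \<tau>)) + a\<^sup>2 * \<tau> / 2"
    using t by (simp add: field_simps power2_eq_square)
  then have "exp (- (x\<^sup>2 / (2 * \<tau>))) * exp (a * x) = exp (a\<^sup>2 * \<tau> / 2) * exp (- ((x - a * \<tau>)\<^sup>2 / (2 * \<tau>)))"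
    by (simp add: exp_add[symmetric] algebra_simps)
  then show ?thesis unfolding normal_density_def using t by simp
qed

lemma normal_mgf_integrable:
  assumes "0 < \<tau>"
  shows "integrable lborel (\<lambda>x. normal_density 0 (sqrt \<tau>) x * exp (a * x))"
  unfolding normal_density_mult_exp[OF assms]
  using integrable_normal_density[where \<sigma>="sqrt \<tau>" and \<mu>="a * \<tau>"] assms by simp

lemma normal_mgf_integral:
  assumes "0 < \<tau>"
  shows "(\<integral>x. normal_density 0 (sqrt \<tau>) x * exp (a * x) \<partial>lborel) = exp (a\<^sup>2 * \<tau> / 2)"
  unfolding normal_density_mult_exp[OF assms]
  using integral_normal_density[where \<sigma>="sqrt \<tau>" and \<mu>="a * \<tau>"] assms by simp

locale bs_market = s_shaped_utility \<alpha> k \<gamma> for \<alpha> k \<gamma> :: real +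
  fixes M :: "'a measure" and B :: "real \<Rightarrow> 'a \<Rightarrow> real" and \<mu> r \<sigma> \<tau> :: real
  assumes BM: "std_brownian_motion M B" and risk_price_nonzero: "(\<mu> - r) / \<sigma> \<noteq> 0" and tau_pos: "0 < \<tau>"
begin

definition phi :: real where "phi = (\<mu> - r) / \<sigma>"
definition drift :: real where "drift = (r + phi\<^sup>2 / 2) * \<tau>"
definition Z_tau :: "real \<Rightarrow> real" where "Z_tau x = exp (- phi * x - drift)"
abbreviation "dens \<equiv> normal_density 0 (sqrt \<tau>)"

lemma phi_nonzero: "phi \<noteq> 0" using risk_price_nonzero unfolding phi_def .

lemma Z_tau_pos: "0 < Z_tau x" unfolding Z_tau_def by simp

lemma B_measurable: "0 \<le> t \<Longrightarrow> B t \<in> borel_measurable M" using BM unfolding std_brownian_motion_def by simp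

lemma B_0_AE: "AE \<omega> in M. B 0 \<omega> = 0" using BM unfolding std_brownian_motion_def by simp

lemma B_tau_distributed: "distributed M lborel (\<lambda>\<omega>. B \<tau> \<omega> - B 0 \<omega>) dens"
proof -
  have "distributed M lborel (\<lambda>\<omega>. B \<tau> \<omega> - B 0 \<omega>) (normal_density 0 (sqrt (\<tau> - 0)))"
    using BM tau_pos unfolding std_brownian_motion_def by blast
  then show ?thesis by simp
qed

lemma pricing_kernel_eq: "pricing_kernel ((\<mu> - r) / \<sigma>) r B \<tau> \<omega> = Z_tau (B \<tau> \<omega>)"
  unfolding pricing_kernel_def Z_tau_def phi_def drift_def by (simp add: algebra_simps)

lemma B_tau_transfer:
  assumes g: "g \<in> borel_measurable borel"
  shows "integrable M (\<lambda>\<omega>. g (B \<tau> \<omega>)) \<longleftrightarrow> integrable lborel (\<lambda>x. dens x * g x)"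
    and "(\<integral>\<omega>. g (B \<tau> \<omega>) \<partial>M) = (\<integral>x. dens x * g x \<partial>lborel)"
proof -
  have m1: "(\<lambda>\<omega>. g (B \<tau> \<omega>)) \<in> borel_measurable M"
    using measurable_compose[OF B_measurable[of \<tau>] g] tau_pos by simp
  have m2: "(\<lambda>\<omega>. g (B \<tau> \<omega> - B 0 \<omega>)) \<in> borel_measurable M"
    using measurable_compose[OF borel_measurable_diff[OF B_measurable[of \<tau>] B_measurable[of 0]] g] tau_pos by simp
  have ae: "AE \<omega> in M. g (B \<tau> \<omega>) = g (B \<tau> \<omega> - B 0 \<omega>)"
    using B_0_AE by eventually_elim simp
  have gl: "g \<in> borel_measurable lborel" using g by simp
  show "integrable M (\<lambda>\<omega>. g (B \<tau> \<omega>)) \<longleftrightarrow> integrable lborel (\<lambda>x. dens x * g x)"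
    using integrable_cong_AE[OF m1 m2 ae] distributed_integrable[OF B_tau_distributed gl] by simp
  show "(\<integral>\<omega>. g (B \<tau> \<omega>) \<partial>M) = (\<integral>x. dens x * g x \<partial>lborel)"
    using integral_cong_AE[OF m1 m2 ae] distributed_integral[OF B_tau_distributed gl] by simp
qed

lemma integrable_Z_tau: "integrable lborel (\<lambda>x. dens x * Z_tau x)"
  and integral_Z_tau: "(\<integral>x. dens x * Z_tau x \<partial>lborel) = exp (- r * \<tau>)"
proof -
  have e: "\<And>x. dens x * Z_tau x = exp (- drift) * (dens x * exp ((- phi) * x))"
    unfolding Z_tau_def by (simp add: exp_diff exp_minus field_simps)
  show "integrable lborel (\<lambda>x. dens x * Z_tau x)" unfolding e using normal_mgf_integrable[OF tau_pos, of "- phi"] by simp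
  have "(\<integral>x. dens x * Z_tau x \<partial>lborel) = exp (- drift) * exp ((- phi)\<^sup>2 * \<tau> / 2)"
    unfolding e using normal_mgf_integral[OF tau_pos, of "- phi"] by simp
  also have "\<dots> = exp (- r * \<tau>)" unfolding drift_def by (simp add: exp_add[symmetric] algebra_simps)
  finally show "(\<integral>x. dens x * Z_tau x \<partial>lborel) = exp (- r * \<tau>)" .
qed

lemma integrable_Z_tau_powr:
  "integrable lborel (\<lambda>x. dens x * (Z_tau x * (lam * Z_tau x / K) powr p))" if "0 < lam" "0 < K"
proof -
  have e: "\<And>x. dens x * (Z_tau x * (lam * Z_tau x / K) powr p)
     = exp (- drift + p * (ln (lam / K) - drift)) * (dens x * exp ((- (1 + p) * phi) * x))"
  proof -
    fix x
    have "(lam * Z_tau x / K) powr p = exp (p * (ln (lam / K) - phi * x - drift))"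
      using that unfolding Z_tau_def powr_def by (simp add: ln_mult ln_div algebra_simps)
    then show "dens x * (Z_tau x * (lam * Z_tau x / K) powr p)
     = exp (- drift + p * (ln (lam / K) - drift)) * (dens x * exp ((- (1 + p) * phi) * x))"
      unfolding Z_tau_def by (simp add: exp_add[symmetric] algebra_simps)
  qed
  show ?thesis unfolding e using normal_mgf_integrable[OF tau_pos, of "- (1 + p) * phi"] by simp
qed


definition deflated_wealth :: "real \<Rightarrow> real \<Rightarrow> real \<Rightarrow> real" where
  "deflated_wealth \<theta> lam x = Z_tau x * y_opt \<theta> (lam * Z_tau x)"

definition budget :: "real \<Rightarrow> real \<Rightarrow> real" where
  "budget \<theta> lam = (\<integral>x. dens x * deflated_wealth \<theta> lam x \<partial>lborel)"

lemma y_opt_Z_tau_measurable: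
  assumes "theta_dom \<theta>" "0 < lam"
  shows "(\<lambda>x. y_opt \<theta> (lam * Z_tau x)) \<in> borel_measurable borel"
proof -
  define Psi where "Psi u = - y_opt \<theta> (exp u)" for u
  have "mono Psi"
  proof (rule monoI)
    fix u v :: real assume "u \<le> v"
    then have "y_opt \<theta> (exp v) \<le> y_opt \<theta> (exp u)" by (intro y_opt_antimono[OF assms(1)]) auto
    then show "Psi u \<le> Psi v" unfolding Psi_def by simp
  qed
  then have mP: "Psi \<in> borel_measurable borel" by (rule borel_measurable_mono)
  have e: "\<And>x. y_opt \<theta> (lam * Z_tau x) = - Psi (ln lam - phi * x - drift)"
    unfolding Psi_def Z_tau_def using assms(2) by (simp add: exp_diff exp_minus exp_add field_simps)
  have "(\<lambda>x. ln lam - phi * x - drift) \<in> borel_measurable borel" by measurable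
  then have "(\<lambda>x. Psi (ln lam - phi * x - drift)) \<in> borel_measurable borel"
    using measurable_compose[OF _ mP] by blast
  then show ?thesis unfolding e by measurable
qed

lemma deflated_wealth_measurable:
  assumes "theta_dom \<theta>" "0 < lam"
  shows "deflated_wealth \<theta> lam \<in> borel_measurable borel"
proof -
  have "Z_tau \<in> borel_measurable borel" unfolding Z_tau_def[abs_def] by measurable
  then show ?thesis unfolding deflated_wealth_def[abs_def] using y_opt_Z_tau_measurable[OF assms] by measurable
qed

definition dominator :: "real \<Rightarrow> real \<Rightarrow> real \<Rightarrow> real" where
  "dominator ll T x = dens x * (\<gamma> * Z_tau x + Z_tau x * (ll * Z_tau x / (\<alpha> * (1 + T))) powr (1 / (\<alpha> - 1)))"

lemma integrable_dominator:
  assumes "0 < ll" "0 \<le> T"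
  shows "integrable lborel (dominator ll T)"
proof -
  have K: "0 < \<alpha> * (1 + T)" using alpha_pos assms by simp
  have i1: "integrable lborel (\<lambda>x. \<gamma> * (dens x * Z_tau x))" using integrable_Z_tau by simp
  have i2: "integrable lborel (\<lambda>x. dens x * (Z_tau x * (ll * Z_tau x / (\<alpha> * (1 + T))) powr (1 / (\<alpha> - 1))))"
    by (rule integrable_Z_tau_powr[OF assms(1) K])
  have "integrable lborel (\<lambda>x. \<gamma> * (dens x * Z_tau x) + dens x * (Z_tau x * (ll * Z_tau x / (\<alpha> * (1 + T))) powr (1 / (\<alpha> - 1))))"
    by (rule Bochner_Integration.integrable_add[OF i1 i2])
  then show ?thesis unfolding dominator_def by (simp add: algebra_simps)
qed

lemma deflated_wealth_bound:
  assumes "theta_dom \<theta>" "0 < ll" "ll \<le> lam" "\<theta> \<le> T" "0 \<le> T"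
  shows "norm (dens x * deflated_wealth \<theta> lam x) \<le> dominator ll T x"
proof -
  have l0: "0 < lam" using assms by simp
  have q0: "0 < lam * Z_tau x" using l0 Z_tau_pos by simp
  have K: "0 < \<alpha> * (1 + T)" using alpha_pos assms by simp
  have P0: "0 \<le> y_opt \<theta> (lam * Z_tau x)" by (rule y_opt_nonneg[OF assms(1) q0])
  have P1: "y_opt \<theta> (lam * Z_tau x) \<le> \<gamma> + (lam * Z_tau x / (\<alpha> * (1 + T))) powr (1 / (\<alpha> - 1))"
    by (rule y_opt_le[OF assms(1) q0 assms(4,5)])
  have "ll * Z_tau x / (\<alpha> * (1 + T)) \<le> lam * Z_tau x / (\<alpha> * (1 + T))"
    using assms Z_tau_pos[of x] K by (intro divide_right_mono mult_right_mono) auto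
  then have "(lam * Z_tau x / (\<alpha> * (1 + T))) powr (1 / (\<alpha> - 1)) \<le> (ll * Z_tau x / (\<alpha> * (1 + T))) powr (1 / (\<alpha> - 1))"
    using powr_mono2'[of "1 / (\<alpha> - 1)" "ll * Z_tau x / (\<alpha> * (1 + T))"] alpha_lt_1 assms(2) Z_tau_pos[of x] K by simp
  then have P2: "y_opt \<theta> (lam * Z_tau x) \<le> \<gamma> + (ll * Z_tau x / (\<alpha> * (1 + T))) powr (1 / (\<alpha> - 1))" using P1 by simp
  have "norm (dens x * deflated_wealth \<theta> lam x) = dens x * (Z_tau x * y_opt \<theta> (lam * Z_tau x))"
    unfolding deflated_wealth_def using P0 Z_tau_pos[of x] by (simp add: abs_mult)
  also have "\<dots> \<le> dens x * (Z_tau x * (\<gamma> + (ll * Z_tau x / (\<alpha> * (1 + T))) powr (1 / (\<alpha> - 1))))"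
    using P2 Z_tau_pos[of x] by (intro mult_left_mono) auto
  also have "\<dots> = dominator ll T x" unfolding dominator_def by (simp add: algebra_simps)
  finally show ?thesis .
qed

lemma integrable_deflated_wealth:
  assumes "theta_dom \<theta>" "0 < lam"
  shows "integrable lborel (\<lambda>x. dens x * deflated_wealth \<theta> lam x)"
proof (rule Bochner_Integration.integrable_bound[OF integrable_dominator[OF assms(2), of "max \<theta> 0"]])
  show "(\<lambda>x. dens x * deflated_wealth \<theta> lam x) \<in> borel_measurable lborel"
    using deflated_wealth_measurable[OF assms] by simp
  show "AE x in lborel. norm (dens x * deflated_wealth \<theta> lam x) \<le> norm (dominator lam (max \<theta> 0) x)"
  proof (rule AE_I2)
    fix x
    have "norm (dens x * deflated_wealth \<theta> lam x) \<le> dominator lam (max \<theta> 0) x"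
      by (rule deflated_wealth_bound[OF assms(1,2) order.refl]) auto
    then show "norm (dens x * deflated_wealth \<theta> lam x) \<le> norm (dominator lam (max \<theta> 0) x)" by simp
  qed
qed simp

lemma Z_tau_inj: "Z_tau x = Z_tau y \<Longrightarrow> x = y"
  unfolding Z_tau_def using phi_nonzero by simp

lemma AE_Z_tau_ne:
  assumes "0 < l0"
  shows "AE x in lborel. l0 * Z_tau x \<noteq> m0"
proof (cases "\<exists>z. l0 * Z_tau z = m0")
  case True
  then obtain z where z: "l0 * Z_tau z = m0" by blast
  show ?thesis using AE_lborel_singleton[of z]
  proof eventually_elim
    case (elim x)
    show ?case
    proof
      assume "l0 * Z_tau x = m0"
      then have "l0 * Z_tau x = l0 * Z_tau z" using z by simp
      then have "Z_tau x = Z_tau z" using assms by simp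
      then show False using Z_tau_inj elim by blast
    qed
  qed
next
  case False then show ?thesis by simp
qed

lemma tendsto_budget:
  assumes ll: "0 < ll" "\<And>n. ll \<le> ls n" "ll \<le> l0"
    and T: "\<And>n. \<theta>s n \<le> T" "\<theta>0 \<le> T" "0 \<le> T" and D: "\<And>n. theta_dom (\<theta>s n)" "theta_dom \<theta>0"
    and pw: "\<And>x. l0 * Z_tau x \<noteq> m0 \<Longrightarrow> (\<lambda>n. y_opt (\<theta>s n) (ls n * Z_tau x)) \<longlonglongrightarrow> y_opt \<theta>0 (l0 * Z_tau x)"
  shows "(\<lambda>n. budget (\<theta>s n) (ls n)) \<longlonglongrightarrow> budget \<theta>0 l0"
  unfolding budget_def
proof (rule integral_dominated_convergence[where w="dominator ll T"])
  have l0p: "0 < l0" using ll by simp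
  show "(\<lambda>x. dens x * deflated_wealth \<theta>0 l0 x) \<in> borel_measurable lborel" using deflated_wealth_measurable[OF D(2) l0p] by simp
  fix n
  have lp: "0 < ls n" using ll(1) ll(2)[of n] by simp
  show "(\<lambda>x. dens x * deflated_wealth (\<theta>s n) (ls n) x) \<in> borel_measurable lborel" using deflated_wealth_measurable[OF D(1) lp] by simp
  show "integrable lborel (dominator ll T)" by (rule integrable_dominator[OF ll(1) T(3)])
  show "AE x in lborel. norm (dens x * deflated_wealth (\<theta>s n) (ls n) x) \<le> dominator ll T x"
    by (rule AE_I2, rule deflated_wealth_bound[OF D(1) ll(1) ll(2) T(1) T(3)])
  show "AE x in lborel. (\<lambda>n. dens x * deflated_wealth (\<theta>s n) (ls n) x) \<longlonglongrightarrow> dens x * deflated_wealth \<theta>0 l0 x"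
    using AE_Z_tau_ne[OF l0p, of m0]
  proof eventually_elim
    case (elim x)
    show ?case unfolding deflated_wealth_def by (intro tendsto_mult tendsto_const pw elim)
  qed
qed

lemma not_AE_Z_tau_gt:
  assumes c: "0 < c"
  shows "\<not> (AE x in lborel. c < Z_tau x)"
proof
  assume ae: "AE x in lborel. c < Z_tau x"
  define a where "a = (- drift - ln c) / phi"
  define b where "b = (if 0 < phi then a else a - 1)"
  have le_c: "Z_tau x \<le> c" if "x \<in> {b..b + 1}" for x
  proof -
    have "a * phi \<le> x * phi"
      using that phi_nonzero unfolding b_def
      by (cases "0 < phi") (auto intro: mult_right_mono mult_right_mono_neg split: if_splits)
    then have "- phi * x - drift \<le> ln c" unfolding a_def using phi_nonzero by (simp add: mult.commute)
    then have "Z_tau x \<le> exp (ln c)" unfolding Z_tau_def by simp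
    then show ?thesis using c by simp
  qed
  have "AE x in lborel. x \<notin> {b..b + 1}" using ae by eventually_elim (use le_c in fastforce)
  then have "emeasure lborel {b..b + 1} = 0" by (subst AE_iff_measurable[symmetric]) auto
  then show False by simp
qed

lemma deflated_wealth_antimono:
  assumes "theta_dom \<theta>" "0 < l1" "l1 \<le> l2"
  shows "deflated_wealth \<theta> l2 x \<le> deflated_wealth \<theta> l1 x"
  unfolding deflated_wealth_def using Z_tau_pos[of x] assms
  by (intro mult_left_mono y_opt_antimono) auto

lemma deflated_wealth_less:
  assumes "theta_dom \<theta>" "0 < l1" "l1 < l2" "\<theta> \<le> 0 \<Longrightarrow> l2 * Z_tau x \<le> m2_root \<theta>"
  shows "deflated_wealth \<theta> l2 x < deflated_wealth \<theta> l1 x"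
  unfolding deflated_wealth_def using Z_tau_pos[of x] assms
  by (intro mult_strict_left_mono y_opt_less) auto

text \<open>Strictness: y_opt is strictly decreasing on (0, threshold], and \<lambda> Z_tau falls into any
  interval (0, c] with positive probability.\<close>

lemma budget_less:
  assumes D: "theta_dom \<theta>" and l: "0 < l1" "l1 < l2"
  shows "budget \<theta> l2 < budget \<theta> l1"
proof (rule ccontr)
  assume "\<not> ?thesis"
  then have le: "budget \<theta> l1 \<le> budget \<theta> l2" by simp
  define d where "d x = dens x * (deflated_wealth \<theta> l1 x - deflated_wealth \<theta> l2 x)" for x
  have i1: "integrable lborel (\<lambda>x. dens x * deflated_wealth \<theta> l1 x)"
    and i2: "integrable lborel (\<lambda>x. dens x * deflated_wealth \<theta> l2 x)"
    using integrable_deflated_wealth[OF D] l by auto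
  have id: "integrable lborel d"
    unfolding d_def right_diff_distrib by (rule Bochner_Integration.integrable_diff[OF i1 i2])
  have dnn: "0 \<le> d x" for x
    unfolding d_def using deflated_wealth_antimono[OF D l(1), of l2 x] l by simp
  have "integral\<^sup>L lborel d = budget \<theta> l1 - budget \<theta> l2"
    unfolding d_def budget_def right_diff_distrib using i1 i2 by simp
  moreover have "0 \<le> integral\<^sup>L lborel d" using dnn by simp
  ultimately have "integral\<^sup>L lborel d = 0" using le by simp
  then have ae: "AE x in lborel. d x = 0" using integral_nonneg_eq_0_iff_AE[OF id] dnn by simp
  define c where "c = (if 0 < \<theta> then 1 else m2_root \<theta>)"
  have c0: "0 < c" unfolding c_def using D by (cases rule: theta_dom_cases) (auto simp: m2_root)
  have "AE x in lborel. c / l2 < Z_tau x"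
    using ae
  proof eventually_elim
    case (elim x)
    show ?case
    proof (rule ccontr)
      assume "\<not> c / l2 < Z_tau x"
      then have "l2 * Z_tau x \<le> c" using l by (simp add: field_simps)
      then have "deflated_wealth \<theta> l2 x < deflated_wealth \<theta> l1 x"
        using c_def by (intro deflated_wealth_less[OF D l]) auto
      moreover have "0 < dens x" using tau_pos by (simp add: normal_density_pos)
      ultimately show False using elim unfolding d_def by simp
    qed
  qed
  then show False using not_AE_Z_tau_gt[of "c / l2"] c0 l by simp
qed

lemma budget_cont_lambda:
  assumes D: "theta_dom \<theta>" and la: "0 < la"
  shows "continuous_on {la..lb} (budget \<theta>)"
proof (rule continuous_on_sequentiallyI)
  fix u :: "nat \<Rightarrow> real" and a
  assume u: "\<forall>n. u n \<in> {la..lb}" and a: "a \<in> {la..lb}" and lim: "u \<longlonglongrightarrow> a"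
  show "(\<lambda>n. budget \<theta> (u n)) \<longlonglongrightarrow> budget \<theta> a"
  proof (rule tendsto_budget[where \<theta>s="\<lambda>_. \<theta>" and ll=la and T="max \<theta> 0"])
    show "0 < la" by (rule la)
    show "\<And>n. la \<le> u n" using u by auto
    show "la \<le> a" using a by auto
    fix x assume x: "a * Z_tau x \<noteq> threshold \<theta>"
    have "(\<lambda>n. u n * Z_tau x) \<longlonglongrightarrow> a * Z_tau x" by (intro tendsto_mult lim tendsto_const)
    then show "(\<lambda>n. y_opt \<theta> (u n * Z_tau x)) \<longlonglongrightarrow> y_opt \<theta> (a * Z_tau x)"
      using tendsto_y_opt[OF tendsto_const D, of sequentially] x a la Z_tau_pos[of x] D by auto
  qed (use D in auto)
qed

lemma budget_lt_one:
  assumes D: "theta_dom \<theta>"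
  shows "\<exists>lam>0. budget \<theta> lam < 1"
proof -
  have lim: "(\<lambda>n. budget \<theta> (real (Suc n))) \<longlonglongrightarrow> integral\<^sup>L lborel (\<lambda>x::real. 0::real)"
    unfolding budget_def
  proof (rule integral_dominated_convergence[where w="dominator 1 (max \<theta> 0)"])
    fix n
    show "(\<lambda>x. dens x * deflated_wealth \<theta> (real (Suc n)) x) \<in> borel_measurable lborel"
      using deflated_wealth_measurable[OF D, of "real (Suc n)"] by simp
    show "integrable lborel (dominator 1 (max \<theta> 0))" by (rule integrable_dominator) auto
    show "AE x in lborel. norm (dens x * deflated_wealth \<theta> (real (Suc n)) x) \<le> dominator 1 (max \<theta> 0) x"
      by (rule AE_I2, rule deflated_wealth_bound[OF D]) auto
    show "AE x in lborel. (\<lambda>n. dens x * deflated_wealth \<theta> (real (Suc n)) x) \<longlonglongrightarrow> 0"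
    proof (rule AE_I2)
      fix x
      have "filterlim (\<lambda>n. real (Suc n) * Z_tau x) at_top sequentially"
        using Z_tau_pos[of x]
        by (intro filterlim_at_top_mult_tendsto_pos[OF tendsto_const]
            filterlim_compose[OF filterlim_real_sequentially filterlim_Suc])
      then have "(\<lambda>n. y_opt \<theta> (real (Suc n) * Z_tau x)) \<longlonglongrightarrow> 0"
        by (rule filterlim_compose[OF tendsto_y_opt_at_top[OF D]])
      then show "(\<lambda>n. dens x * deflated_wealth \<theta> (real (Suc n)) x) \<longlonglongrightarrow> 0"
        unfolding deflated_wealth_def by (intro tendsto_mult_right_zero)
    qed
  qed simp
  then have "(\<lambda>n. budget \<theta> (real (Suc n))) \<longlonglongrightarrow> 0" by simp
  then have "\<forall>\<^sub>F n in sequentially. budget \<theta> (real (Suc n)) < 1" by (rule order_tendstoD(2)) simp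
  then obtain n where "budget \<theta> (real (Suc n)) < 1" using eventually_sequentially by auto
  then show ?thesis by (intro exI[of _ "real (Suc n)"]) auto
qed

lemma tendsto_integral_Z_tau_truncated:
  assumes c: "0 < c"
  shows "(\<lambda>n. \<integral>x. dens x * (Z_tau x * indicator {x. Z_tau x / real (Suc n) \<le> c} x) \<partial>lborel)
    \<longlonglongrightarrow> exp (- r * \<tau>)"
  unfolding integral_Z_tau[symmetric]
proof (rule integral_dominated_convergence[where w="\<lambda>x. dens x * Z_tau x"])
  have m: "Z_tau \<in> borel_measurable borel" unfolding Z_tau_def[abs_def] by measurable
  then show "(\<lambda>x. dens x * Z_tau x) \<in> borel_measurable lborel" by measurable
  show "integrable lborel (\<lambda>x. dens x * Z_tau x)" by (rule integrable_Z_tau)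
  fix n
  show "(\<lambda>x. dens x * (Z_tau x * indicator {x. Z_tau x / real (Suc n) \<le> c} x)) \<in> borel_measurable lborel"
    using m by measurable
  show "AE x in lborel. norm (dens x * (Z_tau x * indicator {x. Z_tau x / real (Suc n) \<le> c} x))
      \<le> dens x * Z_tau x"
    by (rule AE_I2) (simp add: indicator_def abs_mult abs_of_pos[OF Z_tau_pos] less_imp_le[OF Z_tau_pos])
  show "AE x in lborel. (\<lambda>n. dens x * (Z_tau x * indicator {x. Z_tau x / real (Suc n) \<le> c} x))
      \<longlonglongrightarrow> dens x * Z_tau x"
  proof (rule AE_I2)
    fix x
    have "(\<lambda>n. Z_tau x * inverse (real (Suc n))) \<longlonglongrightarrow> Z_tau x * 0"
      by (intro tendsto_mult tendsto_const LIMSEQ_inverse_real_of_nat)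
    then have "\<forall>\<^sub>F n in sequentially. Z_tau x * inverse (real (Suc n)) < c"
      using c by (intro order_tendstoD(2)) auto
    then have "\<forall>\<^sub>F n in sequentially.
        dens x * Z_tau x = dens x * (Z_tau x * indicator {x. Z_tau x / real (Suc n) \<le> c} x)"
      by eventually_elim (simp add: divide_inverse)
    then show "(\<lambda>n. dens x * (Z_tau x * indicator {x. Z_tau x / real (Suc n) \<le> c} x))
        \<longlonglongrightarrow> dens x * Z_tau x"
      by (rule Lim_transform_eventually[OF tendsto_const])
  qed
qed

text \<open>On the events {\<lambda> Z_tau \<le> c} the payoff is at least L, and they exhaust the space as
  \<lambda> \<rightarrow> 0, so the budget eventually exceeds L * exp (- r * \<tau>) - \<epsilon>.\<close>

lemma budget_gt_one_of_bound:
  assumes D: "theta_dom \<theta>" and L: "0 < L" "0 < \<theta> \<or> L \<le> \<gamma>" "1 < L * exp (- r * \<tau>)"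
  shows "\<exists>lam>0. 1 < budget \<theta> lam"
proof -
  obtain c where c: "0 < c" "\<And>q. 0 < q \<and> q \<le> c \<Longrightarrow> L \<le> y_opt \<theta> q"
    using y_opt_ge_small[OF D L(2)] by blast
  define trunc where "trunc n x = dens x * (Z_tau x * indicator {x. Z_tau x / real (Suc n) \<le> c} x)" for n x
  have "(\<lambda>n. L * integral\<^sup>L lborel (trunc n)) \<longlonglongrightarrow> L * exp (- r * \<tau>)"
    unfolding trunc_def by (intro tendsto_mult tendsto_const tendsto_integral_Z_tau_truncated c(1))
  then have "\<forall>\<^sub>F n in sequentially. 1 < L * integral\<^sup>L lborel (trunc n)"
    using L(3) by (rule order_tendstoD(1))
  then obtain n where n: "1 < L * integral\<^sup>L lborel (trunc n)" using eventually_sequentially by auto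
  define lam where "lam = inverse (real (Suc n))"
  have lam0: "0 < lam" unfolding lam_def by simp
  have "integral\<^sup>L lborel (\<lambda>x. L * trunc n x) \<le> budget \<theta> lam"
    unfolding budget_def
  proof (rule integral_mono)
    show "integrable lborel (\<lambda>x. L * trunc n x)"
    proof (rule Bochner_Integration.integrable_bound)
      show "integrable lborel (\<lambda>x. L * (dens x * Z_tau x))" using integrable_Z_tau by simp
      show "(\<lambda>x. L * trunc n x) \<in> borel_measurable lborel" unfolding trunc_def Z_tau_def by measurable
      show "AE x in lborel. norm (L * trunc n x) \<le> norm (L * (dens x * Z_tau x))"
        by (rule AE_I2) (use L(1) Z_tau_pos in \<open>simp add: trunc_def indicator_def abs_mult\<close>)
    qed
    show "integrable lborel (\<lambda>x. dens x * deflated_wealth \<theta> lam x)"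
      by (rule integrable_deflated_wealth[OF D lam0])
    fix x
    have "L * indicator {x. Z_tau x / real (Suc n) \<le> c} x \<le> y_opt \<theta> (lam * Z_tau x)"
      using c(2)[of "lam * Z_tau x"] y_opt_nonneg[OF D, of "lam * Z_tau x"] lam0 Z_tau_pos[of x]
      unfolding lam_def by (auto simp: indicator_def divide_inverse mult.commute)
    then have "Z_tau x * (L * indicator {x. Z_tau x / real (Suc n) \<le> c} x)
        \<le> Z_tau x * y_opt \<theta> (lam * Z_tau x)"
      using Z_tau_pos[of x] by (intro mult_left_mono) auto
    then have "dens x * (Z_tau x * (L * indicator {x. Z_tau x / real (Suc n) \<le> c} x))
        \<le> dens x * (Z_tau x * y_opt \<theta> (lam * Z_tau x))"
      by (rule mult_left_mono) simp
    then show "L * trunc n x \<le> dens x * deflated_wealth \<theta> lam x"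
      unfolding trunc_def deflated_wealth_def by (simp add: ac_simps)
  qed
  then show ?thesis using n lam0 by (intro exI[of _ lam]) auto
qed

definition budget_dom :: "real \<Rightarrow> bool" where
  "budget_dom \<theta> \<longleftrightarrow> theta_dom \<theta> \<and> (0 < \<theta> \<or> exp (r * \<tau>) < \<gamma>)"

text \<open>For \<theta> \<le> 0 the only lower bound on y_opt for small q is \<gamma>, which yields budgets close to
  \<gamma> * exp (- r * \<tau>); hence the hypothesis exp (r * \<tau>) < \<gamma> of the theorem.\<close>

lemma budget_gt_one:
  assumes C: "budget_dom \<theta>"
  shows "\<exists>lam>0. 1 < budget \<theta> lam"
proof -
  have D: "theta_dom \<theta>" using C unfolding budget_dom_def by simp
  define L where "L = (if 0 < \<theta> then exp (r * \<tau>) + 1 else \<gamma>)"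
  have L0: "0 < L" unfolding L_def using gamma_pos by (simp add: add_pos_pos)
  have L1: "0 < \<theta> \<or> L \<le> \<gamma>" unfolding L_def by simp
  have L2: "1 < L * exp (- r * \<tau>)"
  proof (cases "0 < \<theta>")
    case True
    have "L * exp (- r * \<tau>) = 1 + exp (- r * \<tau>)" unfolding L_def using True
      by (simp add: distrib_right exp_add[symmetric])
    then show ?thesis by simp
  next
    case False
    then have "exp (r * \<tau>) * exp (- r * \<tau>) < \<gamma> * exp (- r * \<tau>)"
      using C unfolding budget_dom_def by (intro mult_strict_right_mono) auto
    then show ?thesis unfolding L_def using False by (simp add: exp_add[symmetric])
  qed
  show ?thesis by (rule budget_gt_one_of_bound[OF D L0 L1 L2])
qed

lemma ex1_budget_root:
  assumes C: "budget_dom \<theta>"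
  shows "\<exists>!lam. lam \<in> {0<..} \<and> budget \<theta> lam = 1"
proof -
  have D: "theta_dom \<theta>" using C unfolding budget_dom_def by simp
  obtain la where la: "0 < la" "1 < budget \<theta> la" using budget_gt_one[OF C] by blast
  obtain lb where lb: "0 < lb" "budget \<theta> lb < 1" using budget_lt_one[OF D] by blast
  have anti: "strict_antimono_on {0<..} (budget \<theta>)"
    by (rule monotone_onI) (auto intro: budget_less[OF D])
  have "la \<le> lb" using monotone_onD[OF anti, of lb la] la lb by (cases la lb rule: linorder_cases) auto
  then show ?thesis
    by (rule ex1_root_strict_antimono[OF _ _ budget_cont_lambda[OF D la(1)] _ _ anti])
       (use la lb in auto)
qed

definition lambda_root :: "real \<Rightarrow> real" where
  "lambda_root \<theta> = (THE lam. lam \<in> {0<..} \<and> budget \<theta> lam = 1)"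

lemma lambda_root:
  assumes "budget_dom \<theta>"
  shows "0 < lambda_root \<theta>" "budget \<theta> (lambda_root \<theta>) = 1"
  using theI'[OF ex1_budget_root[OF assms]] unfolding lambda_root_def by auto

lemma lambda_star_eq_lambda_root:
  assumes C: "budget_dom \<theta>"
  shows "lambda_star M B \<mu> r \<sigma> \<tau> \<alpha> k \<gamma> \<theta> = lambda_root \<theta>"
proof -
  have D: "theta_dom \<theta>" using C unfolding budget_dom_def by simp
  have X: "pricing_kernel ((\<mu> - r) / \<sigma>) r B \<tau> \<omega> *
      y_lam \<alpha> k \<gamma> \<theta> lam (pricing_kernel ((\<mu> - r) / \<sigma>) r B \<tau> \<omega>) = deflated_wealth \<theta> lam (B \<tau> \<omega>)"
    for lam \<omega>
    unfolding pricing_kernel_eq y_lam_eq_y_opt deflated_wealth_def ..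
  have P: "(0 < lam \<and> integrable M (\<lambda>\<omega>. deflated_wealth \<theta> lam (B \<tau> \<omega>)) \<and>
        (\<integral>\<omega>. deflated_wealth \<theta> lam (B \<tau> \<omega>) \<partial>M) = 1)
      \<longleftrightarrow> lam \<in> {0<..} \<and> budget \<theta> lam = 1" for lam
  proof (cases "0 < lam")
    case True
    have m: "deflated_wealth \<theta> lam \<in> borel_measurable borel" by (rule deflated_wealth_measurable[OF D True])
    show ?thesis using B_tau_transfer[OF m] integrable_deflated_wealth[OF D True] True unfolding budget_def by simp
  qed simp
  show ?thesis unfolding lambda_star_def Let_def X P lambda_root_def ..
qed

text \<open>Continuity in \<theta> is shown on one branch at a time: on each branch the jump of y_opt
  stays at the threshold, and a jump point is hit by \<lambda> Z_tau only on a null set.\<close>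

lemma budget_cont_theta:
  assumes S: "\<And>t. t \<in> S \<Longrightarrow> theta_dom t" and SS: "S = {0<..} \<or> S = Collect nonpos_dom"
    and t0: "\<theta>0 \<in> S" and lam: "0 < lam"
  shows "((\<lambda>\<theta>. budget \<theta> lam) \<longlongrightarrow> budget \<theta>0 lam) (at \<theta>0 within S)"
proof (rule continuous_within_sequentiallyI[unfolded continuous_within])
  fix u :: "nat \<Rightarrow> real" assume u: "u \<longlonglongrightarrow> \<theta>0" and uS: "\<forall>n. u n \<in> S"
  have branch: "0 < u n \<longleftrightarrow> 0 < \<theta>0" for n
    using SS uS[rule_format, of n] t0 unfolding nonpos_dom_def by auto
  have "Bseq u" using u by (intro convergent_imp_Bseq) (auto simp: convergent_def)
  then obtain K where K: "0 < K" "\<And>n. norm (u n) \<le> K" by (rule BseqE) auto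
  show "(\<lambda>n. budget (u n) lam) \<longlonglongrightarrow> budget \<theta>0 lam"
  proof (rule tendsto_budget[where ls="\<lambda>_. lam" and ll=lam and T="K + \<bar>\<theta>0\<bar>"])
    show "\<And>n. u n \<le> K + \<bar>\<theta>0\<bar>" using K(2) by (smt (verit) abs_ge_zero real_norm_def abs_ge_self)
    fix x assume x: "lam * Z_tau x \<noteq> threshold \<theta>0"
    show "(\<lambda>n. y_opt (u n) (lam * Z_tau x)) \<longlonglongrightarrow> y_opt \<theta>0 (lam * Z_tau x)"
      by (rule tendsto_y_opt[OF u]) (use S t0 uS branch x lam Z_tau_pos[of x] in auto)
  qed (use u lam K S uS t0 in auto)
qed

lemma lambda_root_cont:
  assumes S: "\<And>t. t \<in> S \<Longrightarrow> budget_dom t" and SS: "S = {0<..} \<or> S = Collect nonpos_dom"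
  shows "continuous_on S lambda_root"
  unfolding continuous_on_def
proof
  fix \<theta>0 assume t0: "\<theta>0 \<in> S"
  have SD: "\<And>t. t \<in> S \<Longrightarrow> theta_dom t" using S unfolding budget_dom_def by simp
  have evS: "\<forall>\<^sub>F t in at \<theta>0 within S. t \<in> S" by (simp add: eventually_at_filter)
  have s0: "0 < lambda_root \<theta>0" "budget \<theta>0 (lambda_root \<theta>0) = 1" using lambda_root S t0 by auto
  show "(lambda_root \<longlongrightarrow> lambda_root \<theta>0) (at \<theta>0 within S)"
  proof (rule tendsto_root_antimono[OF s0(1) less_add_one tendsto_const])
    fix c :: real assume c: "0 < c"
    show "((\<lambda>\<theta>. budget \<theta> c) \<longlongrightarrow> budget \<theta>0 c) (at \<theta>0 within S)"
      by (rule budget_cont_theta[OF SD SS t0 c])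
    show "c < lambda_root \<theta>0 \<Longrightarrow> 1 < budget \<theta>0 c" using budget_less[OF SD[OF t0] c, of "lambda_root \<theta>0"] s0 by auto
    show "\<forall>\<^sub>F t in at \<theta>0 within S. (1 < budget t c \<longrightarrow> c < lambda_root t) \<and>
        (budget t c < 1 \<longrightarrow> lambda_root t < c)"
      using evS
    proof eventually_elim
      case (elim t)
      have r: "0 < lambda_root t" "budget t (lambda_root t) = 1" using lambda_root S elim by auto
      have "budget t c \<le> 1" if "lambda_root t \<le> c"
        using budget_less[OF SD[OF elim] r(1), of c] that r by (cases "lambda_root t = c") auto
      moreover have "1 \<le> budget t c" if "c \<le> lambda_root t"
        using budget_less[OF SD[OF elim] c, of "lambda_root t"] that r by (cases "lambda_root t = c") auto
      ultimately show ?case by linarith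
    qed
  next
    fix c assume "lambda_root \<theta>0 < c"
    then show "budget \<theta>0 c < 1" using budget_less[OF SD[OF t0] s0(1)] s0 by simp
  qed
qed

lemma lambda_star_cont:
  assumes S: "\<And>t. t \<in> S \<Longrightarrow> budget_dom t" and SS: "S = {0<..} \<or> S = Collect nonpos_dom"
  shows "continuous_on S (lambda_star M B \<mu> r \<sigma> \<tau> \<alpha> k \<gamma>)"
  using lambda_root_cont[OF S SS] lambda_star_eq_lambda_root S continuous_on_cong by metis

end

theorem propositionA6:
  fixes M :: "'a measure" and B :: "real \<Rightarrow> 'a \<Rightarrow> real"
    and \<mu> r \<sigma> \<tau> \<alpha> k \<gamma> :: real
  assumes "std_brownian_motion M B"
    and "0 < \<sigma>" and "(\<mu> - r) / \<sigma> \<noteq> 0"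
    and "0 < \<tau>" and "0 < \<alpha>" and "\<alpha> < 1" and "0 \<le> k" and "0 < \<gamma>"
  shows "continuous_on {0<..} (lambda_star M B \<mu> r \<sigma> \<tau> \<alpha> k \<gamma>) \<and>
         (\<gamma> > exp (r * \<tau>) \<and> 0 < k \<longrightarrow>
          continuous_on {theta_low \<alpha> k<..0} (lambda_star M B \<mu> r \<sigma> \<tau> \<alpha> k \<gamma>))"
proof -
  interpret bs_market \<alpha> k \<gamma> M B \<mu> r \<sigma> \<tau>
    by unfold_locales (use assms in auto)
  have "continuous_on {0<..} (lambda_star M B \<mu> r \<sigma> \<tau> \<alpha> k \<gamma>)"
    by (rule lambda_star_cont) (auto simp: budget_dom_def theta_dom_def)
  moreover have "continuous_on {theta_low \<alpha> k<..0} (lambda_star M B \<mu> r \<sigma> \<tau> \<alpha> k \<gamma>)"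
    if "\<gamma> > exp (r * \<tau>)" "0 < k"
  proof -
    have S: "{theta_low \<alpha> k<..0} = Collect nonpos_dom" unfolding nonpos_dom_def by auto
    show ?thesis unfolding S
      by (rule lambda_star_cont) (use that in \<open>auto simp: budget_dom_def theta_dom_def\<close>)
  qed
  ultimately show ?thesis by blast
qed

end
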